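(* Let $\mathbb F\in\{\mathbb C,\mathbb H\}$, $d=\dim_{\mathbb R}\mathbb F$, $0\le p<q$, and define $p',q'$ by $p'+1=d(p+1)$, $q'+1=d(q+1)$. Then $\rho_{\mathfrak q}(p,q,d)=\tfrac12(p'+q')=\rho_{\mathfrak q}(p',q',1)$, and for every discrete series parameter $\lambda$ of $\mathbb X(p+1,q+1;\mathbb F)$, $$R^d_{p,q}\tilde\psi_\lambda(a_s)=e^{-(d-1)s}R^1_{p',q'}\tilde\psi_\lambda(a_s)\qquad(s\in\mathbb R),$$ and consequently $\mathcal A^d_{p,q}\tilde\psi_\lambda=\mathcal A^1_{p',q'}\tilde\psi_\lambda$.
   Context: For $\mathbb F\in\{\mathbb R,\mathbb C,\mathbb H\}$, $d=\dim_{\mathbb R}\mathbb F$, integers $p\ge0,q\ge1$: $G=\mathrm U(p+1,q+1;\mathbb F)$ preserves $[x,y]=\sum_{i=1}^{p+1}x_i\bar y_i-\sum_{i=p+2}^{p+q+2}x_i\bar y_i$, $H=\mathrm U(p+1,q;\mathbb F)\times\mathrm U(1;\mathbb F)$ is the stabilizer of $\mathbb F(0,\dots,0,1)^T$, $\mathbb X(p+1,q+1;\mathbb F)=G/H$; $K=\mathrm U(p+1;\mathbb F)\times\mathrm U(q+1;\mathbb F)$; $a_s$ is the identity except entries $(1,1)=(p+q+2,p+q+2)=\cosh s$, $(1,p+q+2)=(p+q+2,1)=\sinh s$. For $u\in\mathbb F^p$, $v=(v_q,\dots,v_1)\in\mathbb F^q$, $w\in\mathrm{Im}\mathbb F$,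 $N_{u,v,w}$ is the block matrix (blocks $1,p,q,1$) with rows $(-w,u,v,w)$, $(-\bar u^T,0,0,\bar u^T)$, $(\bar v^T,0,0,-\bar v^T)$, $(-w,u,v,w)$; for $p<q$, $\mathfrak n^*=\{N_{u,v,w}:v=(-\bar u',v'),u\in\mathbb F^p,v'\in\mathbb F^{q-p},w\in\mathrm{Im}\mathbb F\}$ ($\bar u'$ reversed), $N^*=\exp\mathfrak n^*$ with Lebesgue measure in the coordinates. $R^d_{p,q}f(g)=\int_{N^*}f(gn^*H)dn^*$ is the Radon transform for $\mathbb X(p+1,q+1;\mathbb F)$, and $R^1_{p',q'}$ the one for the real space $\mathbb X(p'+1,q'+1;\mathbb R)$ (with its own $a_s$). $\rho_{\mathfrak q}=\tfrac12(dp+dq+2(d-1))$, $\rho_1=\tfrac12(|dp-dq|+2(d-1))$, $\mathcal A^d_{p,q}f(s)=e^{\rho_1 s}R^d_{p,q}f(a_s)$. $\tilde\psi_\lambda$ denotes, on each space, the $K$-invariant function with $\tilde\psi_\lambda(ka_sH)=(\cosh s)^{-\lambda-\rho_{\mathfrak q}}$. Discrete series parameters: $\lambda=\tfrac12(dq-dp)-1+\mu_\lambda>0$, $\mu_\lambda\in2\mathbb Z$. *)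

theory Defs
  imports "HOL-Analysis.Analysis" "HOL-Probability.Probability"
begin

section \<open>Quaternions (the ambient division algebra containing R and C)\<close>

datatype quat = Quat (qre: real) (qi: real) (qj: real) (qk: real)

instantiation quat :: ring_1
begin
definition "0 = Quat 0 0 0 0"
definition "1 = Quat 1 0 0 0"
definition "x + y = Quat (qre x + qre y) (qi x + qi y) (qj x + qj y) (qk x + qk y)"
definition "x - y = Quat (qre x - qre y) (qi x - qi y) (qj x - qj y) (qk x - qk y)"
definition "- x = Quat (- qre x) (- qi x) (- qj x) (- qk x)"
definition "x * y = Quat
   (qre x * qre y - qi x * qi y - qj x * qj y - qk x * qk y)
   (qre x * qi y + qi x * qre y + qj x * qk y - qk x * qj y)
   (qre x * qj y - qi x * qk y + qj x * qre y + qk x * qi y)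
   (qre x * qk y + qi x * qj y - qj x * qi y + qk x * qre y)"
instance
  by standard (simp_all add: zero_quat_def one_quat_def plus_quat_def minus_quat_def
      uminus_quat_def times_quat_def algebra_simps)
end

definition qcnj :: "quat \<Rightarrow> quat" where
  "qcnj x = Quat (qre x) (- qi x) (- qj x) (- qk x)"

definition qsc :: "real \<Rightarrow> quat \<Rightarrow> quat" where
  "qsc r x = Quat (r * qre x) (r * qi x) (r * qj x) (r * qk x)"

definition qreal :: "real \<Rightarrow> quat" where
  "qreal r = Quat r 0 0 0"

text \<open>The field F (d = 1: R, d = 2: C, d = 4: H) as a subset of the quaternions.\<close>
definition inF :: "nat \<Rightarrow> quat \<Rightarrow> bool" where
  "inF d x \<longleftrightarrow> (d \<le> 1 \<longrightarrow> qi x = 0) \<and> (d \<le> 2 \<longrightarrow> qj x = 0 \<and> qk x = 0)"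

section \<open>Matrices over F (size n, 0-based indices, zero outside the range)\<close>

type_synonym qmat = "nat \<Rightarrow> nat \<Rightarrow> quat"

definition mmul :: "nat \<Rightarrow> qmat \<Rightarrow> qmat \<Rightarrow> qmat" where
  "mmul n A B = (\<lambda>i j. \<Sum>k<n. A i k * B k j)"

definition mid :: "nat \<Rightarrow> qmat" where
  "mid n = (\<lambda>i j. if i < n \<and> j = i then 1 else 0)"

definition mpow :: "nat \<Rightarrow> qmat \<Rightarrow> nat \<Rightarrow> qmat" where
  "mpow n A k = (mmul n A ^^ k) (mid n)"

text \<open>Matrix exponential; it is only applied to nilpotent n x n matrices, for which
  the exponential series terminates after the n-th power.\<close>
definition mexp_nil :: "nat \<Rightarrow> qmat \<Rightarrow> qmat" where
  "mexp_nil n A = (\<lambda>i j. \<Sum>k\<le>n. qsc (1 / fact k) (mpow n A k i j))"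

definition adj :: "qmat \<Rightarrow> qmat" where
  "adj A = (\<lambda>i j. qcnj (A j i))"

definition dimX :: "nat \<Rightarrow> nat \<Rightarrow> nat" where
  "dimX p q = p + q + 2"

definition Jm :: "nat \<Rightarrow> nat \<Rightarrow> qmat" where
  "Jm p q = (\<lambda>i j. if i = j \<and> i < dimX p q then (if i \<le> p then 1 else - 1) else 0)"

definition Gset :: "nat \<Rightarrow> nat \<Rightarrow> nat \<Rightarrow> qmat set" where
  "Gset d p q = {g. (\<forall>i j. (dimX p q \<le> i \<or> dimX p q \<le> j) \<longrightarrow> g i j = 0)
      \<and> (\<forall>i j. inF d (g i j))
      \<and> mmul (dimX p q) (mmul (dimX p q) (adj g) (Jm p q)) g = Jm p q}"

text \<open>K = U(p+1;F) x U(q+1;F): the block-diagonal elements of G.\<close>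
definition Kset :: "nat \<Rightarrow> nat \<Rightarrow> nat \<Rightarrow> qmat set" where
  "Kset d p q = {k \<in> Gset d p q. \<forall>i j. (i \<le> p \<and> p < j) \<or> (p < i \<and> j \<le> p) \<longrightarrow> k i j = 0}"

text \<open>H: stabilizer in G of the line F(0,...,0,1)^T.\<close>
definition Hset :: "nat \<Rightarrow> nat \<Rightarrow> nat \<Rightarrow> qmat set" where
  "Hset d p q = {h \<in> Gset d p q. \<forall>i < dimX p q - 1. h i (dimX p q - 1) = 0}"

definition amat :: "nat \<Rightarrow> nat \<Rightarrow> real \<Rightarrow> qmat" where
  "amat p q s = (\<lambda>i j. let n = dimX p q in
     if i < n \<and> j < n then
       (if (i = 0 \<or> i = n - 1) \<and> (j = 0 \<or> j = n - 1) then
          (if i = j then qreal (cosh s) else qreal (sinh s))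
        else if i = j then 1 else 0)
     else 0)"

text \<open>N_{u,v,w} with blocks of sizes 1, p, q, 1; u, v indexed positionally from 0.\<close>
definition Nmat :: "nat \<Rightarrow> nat \<Rightarrow> (nat \<Rightarrow> quat) \<Rightarrow> (nat \<Rightarrow> quat) \<Rightarrow> quat \<Rightarrow> qmat" where
  "Nmat p q u v w = (\<lambda>i j. let n = dimX p q in
     if i < n \<and> j < n then
       (if i = 0 \<or> i = n - 1 then
          (if j = 0 then - w
           else if j \<le> p then u (j - 1)
           else if j \<le> p + q then v (j - p - 1)
           else w)
        else if i \<le> p then
          (if j = 0 then - qcnj (u (i - 1)) else if j = n - 1 then qcnj (u (i - 1)) else 0)
        else
          (if j = 0 then qcnj (v (i - p - 1)) else if j = n - 1 then - qcnj (v (i - p - 1)) else 0))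
     else 0)"

text \<open>Real coordinates: an element of F is read off from d consecutive coordinates,
  an element of Im F from d - 1 consecutive coordinates.\<close>
definition qof :: "nat \<Rightarrow> (nat \<Rightarrow> real) \<Rightarrow> nat \<Rightarrow> quat" where
  "qof d y off = Quat (y off) (if 2 \<le> d then y (off + 1) else 0)
      (if 4 \<le> d then y (off + 2) else 0) (if 4 \<le> d then y (off + 3) else 0)"

definition imof :: "nat \<Rightarrow> (nat \<Rightarrow> real) \<Rightarrow> nat \<Rightarrow> quat" where
  "imof d y off = Quat 0 (if 2 \<le> d then y off else 0)
      (if 4 \<le> d then y (off + 1) else 0) (if 4 \<le> d then y (off + 2) else 0)"

definition ncoord :: "nat \<Rightarrow> nat \<Rightarrow> nat \<Rightarrow> nat" where
  "ncoord d p q = d * q + d - 1"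

definition u_of :: "nat \<Rightarrow> nat \<Rightarrow> (nat \<Rightarrow> real) \<Rightarrow> nat \<Rightarrow> quat" where
  "u_of d p y i = (if i < p then qof d y (d * i) else 0)"

definition v_of :: "nat \<Rightarrow> nat \<Rightarrow> nat \<Rightarrow> (nat \<Rightarrow> real) \<Rightarrow> nat \<Rightarrow> quat" where
  "v_of d p q y j = (if j < p then - qcnj (u_of d p y (p - 1 - j))
                     else if j < q then qof d y (d * p + d * (j - p)) else 0)"

definition nstar :: "nat \<Rightarrow> nat \<Rightarrow> nat \<Rightarrow> (nat \<Rightarrow> real) \<Rightarrow> qmat" where
  "nstar d p q y = mexp_nil (dimX p q)
     (Nmat p q (u_of d p y) (v_of d p q y) (imof d y (d * q)))"

definition Radon :: "nat \<Rightarrow> nat \<Rightarrow> nat \<Rightarrow> (qmat \<Rightarrow> real) \<Rightarrow> qmat \<Rightarrow> real" where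
  "Radon d p q f g =
     (\<integral>y. f (mmul (dimX p q) g (nstar d p q y)) \<partial>(Pi\<^sub>M {..<ncoord d p q} (\<lambda>_. lborel)))"

definition rho_q :: "nat \<Rightarrow> nat \<Rightarrow> nat \<Rightarrow> real" where
  "rho_q d p q = (real (d * p) + real (d * q) + 2 * (real d - 1)) / 2"

definition rho_1 :: "nat \<Rightarrow> nat \<Rightarrow> nat \<Rightarrow> real" where
  "rho_1 d p q = (\<bar>real (d * p) - real (d * q)\<bar> + 2 * (real d - 1)) / 2"

definition psi :: "nat \<Rightarrow> nat \<Rightarrow> nat \<Rightarrow> real \<Rightarrow> qmat \<Rightarrow> real" where
  "psi d p q lam g = (THE c. \<exists>k \<in> Kset d p q. \<exists>s. \<exists>h \<in> Hset d p q.
      g = mmul (dimX p q) (mmul (dimX p q) k (amat p q s)) h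
      \<and> c = cosh s powr (- lam - rho_q d p q))"

definition Aop :: "nat \<Rightarrow> nat \<Rightarrow> nat \<Rightarrow> (qmat \<Rightarrow> real) \<Rightarrow> real \<Rightarrow> real" where
  "Aop d p q f s = exp (rho_1 d p q * s) * Radon d p q f (amat p q s)"

end

theory Submission
  imports Defs
begin

(* In any decomposition g = k a_r h one has cosh(r)^2 = lower_norm g,
     the squared norm of the lower q+1 entries of the last column of g (K preserves the block
     norms, H fixes the last line).  So psi(g) = sqrt(lower_norm g) powr (-lambda - rho_q).
   - lower_norm(a_s n) for n in N* is the explicit function phi_coord of the real coordinates
     of n: |u|^2 + |v'|^2 + (cosh s - e^s |v'|^2 / 2)^2 + e^(2s) |w|^2.
   - The phi_coord of F equals that of R after permuting the coordinates (the d - 1 coordinates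
     of w become u-coordinates) and rescaling those by e^s.  A linear change of variables in
     product Lebesgue measure gives the Jacobian e^(-(d-1)s); as rho_q agrees and rho_1 drops
     by d - 1, the Radon and the Abel-type transforms compare as stated. *)

lemma quat_eq_iff: "x = y \<longleftrightarrow> qre x = qre y \<and> qi x = qi y \<and> qj x = qj y \<and> qk x = qk y"
  by (cases x; cases y) auto

lemma quat_simps[simp]:
  "qre 0 = 0" "qi 0 = 0" "qj 0 = 0" "qk 0 = 0"
  "qre 1 = 1" "qi 1 = 0" "qj 1 = 0" "qk 1 = 0"
  "qre (x + y) = qre x + qre y" "qi (x + y) = qi x + qi y" "qj (x + y) = qj x + qj y" "qk (x + y) = qk x + qk y"
  "qre (x - y) = qre x - qre y" "qi (x - y) = qi x - qi y" "qj (x - y) = qj x - qj y" "qk (x - y) = qk x - qk y"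
  "qre (- x) = - qre x" "qi (- x) = - qi x" "qj (- x) = - qj x" "qk (- x) = - qk x"
  "qre (x * y) = qre x * qre y - qi x * qi y - qj x * qj y - qk x * qk y"
  "qi (x * y) = qre x * qi y + qi x * qre y + qj x * qk y - qk x * qj y"
  "qj (x * y) = qre x * qj y - qi x * qk y + qj x * qre y + qk x * qi y"
  "qk (x * y) = qre x * qk y + qi x * qj y - qj x * qi y + qk x * qre y"
  "qre (qcnj x) = qre x" "qi (qcnj x) = - qi x" "qj (qcnj x) = - qj x" "qk (qcnj x) = - qk x"
  "qre (qsc r x) = r * qre x" "qi (qsc r x) = r * qi x" "qj (qsc r x) = r * qj x" "qk (qsc r x) = r * qk x"
  "qre (qreal r) = r" "qi (qreal r) = 0" "qj (qreal r) = 0" "qk (qreal r) = 0"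
  by (simp_all add: zero_quat_def one_quat_def plus_quat_def minus_quat_def uminus_quat_def
      times_quat_def qcnj_def qsc_def qreal_def)

lemma quat_sum_simps[simp]:
  "qre (sum f A) = (\<Sum>a\<in>A. qre (f a))" "qi (sum f A) = (\<Sum>a\<in>A. qi (f a))"
  "qj (sum f A) = (\<Sum>a\<in>A. qj (f a))" "qk (sum f A) = (\<Sum>a\<in>A. qk (f a))"
  by (induction A rule: infinite_finite_induct; simp)+

definition qnorm2 :: "quat \<Rightarrow> real" where
  "qnorm2 x = qre x ^ 2 + qi x ^ 2 + qj x ^ 2 + qk x ^ 2"

lemma qnorm2_nonneg[simp]: "0 \<le> qnorm2 x" by (simp add: qnorm2_def)

lemma qnorm2_eq_0: "qnorm2 x = 0 \<longleftrightarrow> x = 0"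
  by (simp add: qnorm2_def quat_eq_iff) (smt (verit) sum_power2_eq_zero_iff zero_le_power2)

lemma qnorm2_simps[simp]:
  "qnorm2 0 = 0" "qnorm2 1 = 1" "qnorm2 (qcnj x) = qnorm2 x" "qnorm2 (- x) = qnorm2 x"
  "qnorm2 (qreal r) = r\<^sup>2"
  by (simp_all add: qnorm2_def)

lemma qnorm2_mult: "qnorm2 (x * y) = qnorm2 x * qnorm2 y"
  by (simp add: qnorm2_def power2_eq_square algebra_simps)

lemma qnorm2_diff: "qnorm2 (x - y) = qnorm2 x + qnorm2 y - 2 * qre (qcnj x * y)"
  by (simp add: qnorm2_def power2_eq_square algebra_simps)

lemma qnorm2_qsc: "qnorm2 (qsc r x) = r\<^sup>2 * qnorm2 x"
  by (simp add: qnorm2_def power_mult_distrib algebra_simps)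

lemma qnorm2_sum_zero: "finite A \<Longrightarrow> (\<Sum>i\<in>A. qnorm2 (f i)) = 0 \<Longrightarrow> i \<in> A \<Longrightarrow> f i = 0"
  using sum_nonneg_eq_0_iff[of A "\<lambda>i. qnorm2 (f i)"] by (simp add: qnorm2_eq_0)

lemma qcnj_simps[simp]:
  "qcnj (x * y) = qcnj y * qcnj x" "qcnj (x + y) = qcnj x + qcnj y" "qcnj (x - y) = qcnj x - qcnj y"
  "qcnj (- x) = - qcnj x" "qcnj (qcnj x) = x" "qcnj 0 = 0" "qcnj 1 = 1" "qcnj (qreal r) = qreal r"
  "qcnj (qsc r x) = qsc r (qcnj x)"
  by (simp_all add: quat_eq_iff algebra_simps)

lemma qcnj_sum[simp]: "qcnj (sum f A) = (\<Sum>a\<in>A. qcnj (f a))"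
  by (simp add: quat_eq_iff sum_negf)

lemma qcnj_mult_self: "qcnj x * x = qreal (qnorm2 x)" "x * qcnj x = qreal (qnorm2 x)"
  by (simp_all add: quat_eq_iff qnorm2_def power2_eq_square algebra_simps)

lemma qreal_comm: "qreal r * x = x * qreal r" by (simp add: quat_eq_iff)
lemma qsc_def': "qsc r x = qreal r * x" by (simp add: quat_eq_iff)
lemma qsc_def'': "qsc r x = x * qreal r" by (simp add: quat_eq_iff)

lemma qreal_simps[simp]: "qreal 0 = 0" "qreal 1 = 1" "qreal (a + b) = qreal a + qreal b"
  "qreal (a - b) = qreal a - qreal b" "qreal (a * b) = qreal a * qreal b" "qreal (- a) = - qreal a"
  by (simp_all add: quat_eq_iff)

lemma qreal_inj[simp]: "qreal a = qreal b \<longleftrightarrow> a = b" by (simp add: quat_eq_iff)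
lemma qreal_sum: "qreal (sum f A) = (\<Sum>a\<in>A. qreal (f a))" by (simp add: quat_eq_iff)

lemma qsc_simps[simp]: "qsc 1 x = x" "qsc 0 x = 0" "qsc r 0 = 0"
  by (simp_all add: quat_eq_iff)

lemma qsc_sum: "qsc r (sum f A) = (\<Sum>a\<in>A. qsc r (f a))"
  by (simp add: quat_eq_iff sum_distrib_left)

lemma qsc_mult: "qsc r x * y = qsc r (x * y)" "x * qsc r y = qsc r (x * y)"
  by (simp_all add: quat_eq_iff algebra_simps)

lemma inF_simps:
  "inF d 0" "inF d 1" "inF d (qreal r)"
  "inF d x \<Longrightarrow> inF d y \<Longrightarrow> inF d (x + y)"
  "inF d x \<Longrightarrow> inF d y \<Longrightarrow> inF d (x - y)"
  "inF d x \<Longrightarrow> inF d y \<Longrightarrow> inF d (x * y)"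
  "inF d x \<Longrightarrow> inF d (- x)"
  "inF d x \<Longrightarrow> inF d (qcnj x)"
  "inF d x \<Longrightarrow> inF d (qsc r x)"
  by (auto simp: inF_def)

lemma inF_sum: "(\<And>a. a \<in> A \<Longrightarrow> inF d (f a)) \<Longrightarrow> inF d (sum f A)"
  by (induction A rule: infinite_finite_induct) (auto intro: inF_simps)

definition supp :: "nat \<Rightarrow> qmat \<Rightarrow> bool" where
  "supp n A \<longleftrightarrow> (\<forall>i j. n \<le> i \<or> n \<le> j \<longrightarrow> A i j = 0)"

definition madd :: "qmat \<Rightarrow> qmat \<Rightarrow> qmat" where "madd A B = (\<lambda>i j. A i j + B i j)"
definition msub :: "qmat \<Rightarrow> qmat \<Rightarrow> qmat" where "msub A B = (\<lambda>i j. A i j - B i j)"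
definition mneg :: "qmat \<Rightarrow> qmat" where "mneg A = (\<lambda>i j. - A i j)"
definition msc :: "real \<Rightarrow> qmat \<Rightarrow> qmat" where "msc r A = (\<lambda>i j. qsc r (A i j))"
definition mzero :: qmat where "mzero = (\<lambda>i j. 0)"

lemma mmul_assoc: "mmul n (mmul n A B) C = mmul n A (mmul n B C)"
  by (auto simp: mmul_def sum_distrib_left sum_distrib_right mult.assoc intro!: ext sum.swap)

lemma adj_mmul: "adj (mmul n A B) = mmul n (adj B) (adj A)"
  by (auto simp: mmul_def adj_def intro!: ext)

lemma adj_simps[simp]: "adj (adj A) = A" "adj (mid n) = mid n" "adj (Jm p q) = Jm p q"
  by (auto simp: adj_def mid_def Jm_def intro!: ext)

lemma adj_madd: "adj (madd A B) = madd (adj A) (adj B)" by (simp add: adj_def madd_def)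
lemma adj_msub: "adj (msub A B) = msub (adj A) (adj B)" by (simp add: adj_def msub_def)
lemma adj_msc: "adj (msc r A) = msc r (adj A)" by (simp add: adj_def msc_def)

lemma mmul_madd_left: "mmul n (madd A B) C = madd (mmul n A C) (mmul n B C)"
  by (simp add: mmul_def madd_def distrib_right sum.distrib)
lemma mmul_madd_right: "mmul n A (madd B C) = madd (mmul n A B) (mmul n A C)"
  by (simp add: mmul_def madd_def distrib_left sum.distrib)
lemma mmul_msub_left: "mmul n (msub A B) C = msub (mmul n A C) (mmul n B C)"
  by (simp add: mmul_def msub_def left_diff_distrib sum_subtractf)
lemma mmul_msub_right: "mmul n A (msub B C) = msub (mmul n A B) (mmul n A C)"
  by (simp add: mmul_def msub_def right_diff_distrib sum_subtractf)
lemma mmul_mneg_left: "mmul n (mneg A) C = mneg (mmul n A C)"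
  by (simp add: mmul_def mneg_def sum_negf)
lemma mmul_mneg_right: "mmul n A (mneg C) = mneg (mmul n A C)"
  by (simp add: mmul_def mneg_def sum_negf)
lemma mmul_msc_left: "mmul n (msc r A) C = msc r (mmul n A C)"
  by (simp add: mmul_def msc_def qsc_def' sum_distrib_left mult.assoc)
lemma mmul_msc_right: "mmul n A (msc r C) = msc r (mmul n A C)"
  by (simp add: mmul_def msc_def qsc_def'' sum_distrib_right mult.assoc)
lemma mmul_mzero[simp]: "mmul n mzero A = mzero" "mmul n A mzero = mzero"
  by (simp_all add: mmul_def mzero_def)

lemma mmul_col_mid:
  assumes "supp n A" "\<And>m. B m j = mid n m j"
  shows "mmul n A B i j = A i j"
proof (cases "j < n")
  case True
  have "mmul n A B i j = (\<Sum>k<n. if k = j then A i j else 0)"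
    unfolding mmul_def using assms(2) by (intro sum.cong) (auto simp: mid_def)
  then show ?thesis using True by simp
qed (use assms in \<open>auto simp: mmul_def mid_def supp_def\<close>)

lemma mmul_row_mid:
  assumes "supp n B" "\<And>m. A i m = mid n i m"
  shows "mmul n A B i j = B i j"
proof (cases "i < n")
  case True
  have "mmul n A B i j = (\<Sum>k<n. if k = i then B i j else 0)"
    unfolding mmul_def using assms(2) by (intro sum.cong) (auto simp: mid_def)
  then show ?thesis using True by simp
qed (use assms in \<open>auto simp: mmul_def mid_def supp_def\<close>)

lemma mmul_mid_left: "supp n A \<Longrightarrow> mmul n (mid n) A = A"
  by (intro ext mmul_row_mid) simp_all
lemma mmul_mid_right: "supp n A \<Longrightarrow> mmul n A (mid n) = A"
  by (intro ext mmul_col_mid) simp_all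

lemma supp_mmul: "supp n A \<Longrightarrow> supp n B \<Longrightarrow> supp n (mmul n A B)"
  by (auto simp: supp_def mmul_def)
lemma supp_mid[simp]: "supp n (mid n)" by (simp add: supp_def mid_def)
lemma supp_adj: "supp n A \<Longrightarrow> supp n (adj A)" by (auto simp: supp_def adj_def)
lemma supp_madd: "supp n A \<Longrightarrow> supp n B \<Longrightarrow> supp n (madd A B)" by (simp add: supp_def madd_def)
lemma supp_msc: "supp n A \<Longrightarrow> supp n (msc r A)" by (simp add: supp_def msc_def)

lemma inF_mmul: "(\<And>i j. inF d (A i j)) \<Longrightarrow> (\<And>i j. inF d (B i j)) \<Longrightarrow> inF d (mmul n A B i j)"
  unfolding mmul_def by (intro inF_sum inF_simps)

definition unitary :: "nat \<Rightarrow> nat \<Rightarrow> qmat \<Rightarrow> bool" where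
  "unitary d n U \<longleftrightarrow> supp n U \<and> (\<forall>i j. inF d (U i j))
     \<and> mmul n (adj U) U = mid n \<and> mmul n U (adj U) = mid n"

lemma unitary_mmul:
  assumes U: "unitary d n U" and V: "unitary d n V"
  shows "unitary d n (mmul n U V)"
proof -
  have "mmul n (adj (mmul n U V)) (mmul n U V) = mmul n (adj V) (mmul n (mmul n (adj U) U) V)"
    by (simp add: adj_mmul mmul_assoc)
  moreover have "mmul n (mmul n U V) (adj (mmul n U V)) = mmul n U (mmul n (mmul n V (adj V)) (adj U))"
    by (simp add: adj_mmul mmul_assoc)
  ultimately show ?thesis using U V
    by (auto simp: unitary_def mmul_mid_left supp_adj supp_mmul intro: inF_mmul)
qed

abbreviation lst :: "nat \<Rightarrow> nat \<Rightarrow> nat" where "lst p q \<equiv> Suc (p + q)"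

definition sg :: "nat \<Rightarrow> nat \<Rightarrow> quat" where "sg p j = (if j \<le> p then 1 else - 1)"

lemma Jm_right: "mmul (dimX p q) X (Jm p q) i j = (if j < dimX p q then X i j * sg p j else 0)"
proof -
  have "mmul (dimX p q) X (Jm p q) i j = (\<Sum>k<dimX p q. if k = j then X i j * sg p j else 0)"
    unfolding mmul_def Jm_def sg_def by (intro sum.cong) auto
  then show ?thesis by simp
qed

lemma Jm_left: "mmul (dimX p q) (Jm p q) X i j = (if i < dimX p q then sg p i * X i j else 0)"
proof -
  have "mmul (dimX p q) (Jm p q) X i j = (\<Sum>k<dimX p q. if k = i then sg p i * X i j else 0)"
    unfolding mmul_def Jm_def sg_def by (intro sum.cong) auto
  then show ?thesis by simp
qed

lemma sum_lessThan_add: "(\<Sum>k<(a::nat)+b. F k) = (\<Sum>k<a. F k) + (\<Sum>k<b. F (k + a))"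
  by (induction b) (simp_all add: add_ac)

lemma sum_dimX_split: "(\<Sum>m<dimX p q. f m) = (\<Sum>m<Suc p. f m) + (\<Sum>t<Suc q. f (t + Suc p))"
proof -
  have "dimX p q = Suc p + Suc q" by (simp add: dimX_def)
  then show ?thesis by (simp only: sum_lessThan_add)
qed

lemma supp_Jm[simp]: "supp (dimX p q) (Jm p q)" by (simp add: supp_def Jm_def)

lemma sum_dimX_blocks:
  "(\<Sum>k<dimX p q. F k) = F 0 + F (lst p q) + (\<Sum>k<p. F (k+1)) + (\<Sum>k<q. F (k+p+1))"
proof -
  have "dimX p q = Suc (p + q + 1)" by (simp add: dimX_def)
  then have "(\<Sum>k<dimX p q. F k) = (\<Sum>k<p+q+1. F k) + F (p+q+1)" by simp
  also have "(\<Sum>k<p+q+1. F k) = F 0 + (\<Sum>k<p+q. F (Suc k))"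
    using sum.lessThan_Suc_shift[of F "p+q"] by simp
  also have "(\<Sum>k<p+q. F (Suc k)) = (\<Sum>k<p. F (k+1)) + (\<Sum>k<q. F (k+p+1))"
    by (subst sum_lessThan_add) (simp add: add.commute add.left_commute)
  finally show ?thesis by (simp add: algebra_simps)
qed

lemma Gset_iff:
  "g \<in> Gset d p q \<longleftrightarrow> supp (dimX p q) g \<and> (\<forall>i j. inF d (g i j))
     \<and> mmul (dimX p q) (mmul (dimX p q) (adj g) (Jm p q)) g = Jm p q"
  by (auto simp: Gset_def supp_def)

lemma Gset_mmul:
  assumes "g \<in> Gset d p q" "h \<in> Gset d p q"
  shows "mmul (dimX p q) g h \<in> Gset d p q"
proof -
  let ?n = "dimX p q" and ?J = "Jm p q"
  have g: "mmul ?n (mmul ?n (adj g) ?J) g = ?J" and h: "mmul ?n (mmul ?n (adj h) ?J) h = ?J"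
    using assms by (simp_all add: Gset_iff)
  have "mmul ?n (mmul ?n (adj (mmul ?n g h)) ?J) (mmul ?n g h)
      = mmul ?n (adj h) (mmul ?n (mmul ?n (mmul ?n (adj g) ?J) g) h)"
    by (simp add: adj_mmul mmul_assoc)
  also have "\<dots> = ?J" using g h by (simp add: mmul_assoc)
  finally show ?thesis using assms by (simp add: Gset_iff supp_mmul inF_mmul)
qed

lemma unitary_Gset:
  assumes U: "unitary d (dimX p q) U" and JU: "mmul (dimX p q) (Jm p q) U = mmul (dimX p q) U (Jm p q)"
  shows "U \<in> Gset d p q"
proof -
  let ?n = "dimX p q" and ?J = "Jm p q"
  have "mmul ?n (mmul ?n (adj U) ?J) U = mmul ?n (mmul ?n (adj U) U) ?J"
    by (simp add: mmul_assoc JU)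
  then show ?thesis using U by (simp add: Gset_iff unitary_def mmul_mid_left supp_def Jm_def)
qed

text \<open>Since g preserves the form, its last column has form value -1: the positive block has
  squared norm one less than the negative block.\<close>
lemma last_col_norm:
  assumes "g \<in> Gset d p q"
  shows "(\<Sum>m<Suc p. qnorm2 (g m (lst p q))) - (\<Sum>t<Suc q. qnorm2 (g (t + Suc p) (lst p q))) = -1"
proof -
  let ?n = "dimX p q" and ?l = "lst p q"
  have "mmul ?n (mmul ?n (adj g) (Jm p q)) g ?l ?l = (\<Sum>m<?n. qcnj (g m ?l) * sg p m * g m ?l)"
    unfolding mmul_def[of ?n "mmul ?n (adj g) (Jm p q)"] Jm_right
    by (intro sum.cong refl) (simp add: adj_def)
  also have "\<dots> = qreal ((\<Sum>m<Suc p. qnorm2 (g m ?l)) - (\<Sum>t<Suc q. qnorm2 (g (t + Suc p) ?l)))"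
    unfolding sum_dimX_split by (simp add: sg_def qcnj_mult_self sum_negf qreal_sum)
  moreover have "mmul ?n (mmul ?n (adj g) (Jm p q)) g ?l ?l = qreal (-1)"
    using assms by (simp add: Gset_iff Jm_def dimX_def)
  ultimately show ?thesis by (simp only: qreal_inj)
qed

text \<open>The squared norm of the negative block of the last column.  It is the quantity that
  determines psi-tilde.\<close>
definition lower_norm :: "nat \<Rightarrow> nat \<Rightarrow> qmat \<Rightarrow> real" where
  "lower_norm p q g = (\<Sum>t<Suc q. qnorm2 (g (t + Suc p) (lst p q)))"

lemma sum_two:
  fixes A B :: "'a::comm_monoid_add" and a b n :: nat
  assumes "a \<noteq> b" "a < n" "b < n"
  shows "(\<Sum>k<n. if k = a then A else if k = b then B else 0) = A + B"
proof -
  have "(\<Sum>k<n. if k = a then A else if k = b then B else 0)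
      = (\<Sum>k<n. (if k = a then A else 0) + (if k = b then B else 0))"
    using assms by (intro sum.cong) auto
  also have "\<dots> = A + B" using assms by (simp add: sum.distrib)
  finally show ?thesis .
qed

lemma amat_left: "mmul (dimX p q) (amat p q s) X i j =
  (if i < dimX p q then
     (if i = 0 then qreal (cosh s) * X 0 j + qreal (sinh s) * X (lst p q) j
      else if i = lst p q then qreal (sinh s) * X 0 j + qreal (cosh s) * X (lst p q) j
      else X i j) else 0)"
proof (cases "i = 0 \<or> i = lst p q")
  case True
  have "mmul (dimX p q) (amat p q s) X i j
     = (\<Sum>k<dimX p q. if k = 0 then (if i = 0 then qreal (cosh s) else qreal (sinh s)) * X 0 j
          else if k = lst p q then (if i = 0 then qreal (sinh s) else qreal (cosh s)) * X (lst p q) j else 0)"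
    unfolding mmul_def using True by (intro sum.cong refl) (auto simp: amat_def Let_def dimX_def)
  also have "\<dots> = (if i = 0 then qreal (cosh s) else qreal (sinh s)) * X 0 j
      + (if i = 0 then qreal (sinh s) else qreal (cosh s)) * X (lst p q) j"
    by (rule sum_two) (auto simp: dimX_def)
  finally show ?thesis using True by (auto simp: dimX_def)
next
  case False
  have "mmul (dimX p q) (amat p q s) X i j = (\<Sum>k<dimX p q. if k = i then X i j else 0)"
    unfolding mmul_def using False by (intro sum.cong refl) (auto simp: amat_def Let_def dimX_def)
  then show ?thesis using False by simp
qed

lemma amat_right: "mmul (dimX p q) X (amat p q s) i j =
  (if j < dimX p q then
     (if j = 0 then X i 0 * qreal (cosh s) + X i (lst p q) * qreal (sinh s)
      else if j = lst p q then X i 0 * qreal (sinh s) + X i (lst p q) * qreal (cosh s)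
      else X i j) else 0)"
proof (cases "j = 0 \<or> j = lst p q")
  case True
  have "mmul (dimX p q) X (amat p q s) i j
     = (\<Sum>k<dimX p q. if k = 0 then X i 0 * (if j = 0 then qreal (cosh s) else qreal (sinh s))
          else if k = lst p q then X i (lst p q) * (if j = 0 then qreal (sinh s) else qreal (cosh s)) else 0)"
    unfolding mmul_def using True by (intro sum.cong refl) (auto simp: amat_def Let_def dimX_def)
  also have "\<dots> = X i 0 * (if j = 0 then qreal (cosh s) else qreal (sinh s))
      + X i (lst p q) * (if j = 0 then qreal (sinh s) else qreal (cosh s))"
    by (rule sum_two) (auto simp: dimX_def)
  finally show ?thesis using True by (auto simp: dimX_def)
next
  case False
  have "mmul (dimX p q) X (amat p q s) i j = (\<Sum>k<dimX p q. if k = j then X i j else 0)"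
    unfolding mmul_def using False by (intro sum.cong refl) (auto simp: amat_def Let_def dimX_def)
  then show ?thesis using False by simp
qed

lemma supp_amat[simp]: "supp (dimX p q) (amat p q s)"
  by (simp add: supp_def amat_def Let_def)

lemma cosh_sq_real: "cosh s * cosh s = 1 + sinh s * sinh (s::real)"
  using cosh_square_eq[of s] by (simp add: power2_eq_square)

lemma amat_G: "amat p q s \<in> Gset d p q"
proof -
  have adj: "adj (amat p q s) = amat p q s"
    by (auto simp: adj_def amat_def Let_def intro!: ext)
  have "mmul (dimX p q) (mmul (dimX p q) (adj (amat p q s)) (Jm p q)) (amat p q s) = Jm p q"
    unfolding amat_right adj Jm_right
    by (auto simp: amat_def Let_def Jm_def sg_def dimX_def quat_eq_iff cosh_sq_real algebra_simps
        intro!: ext)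
  then show ?thesis
    by (auto simp: Gset_def amat_def Let_def inF_def qreal_def)
qed

lemma amat_inv: "mmul (dimX p q) (amat p q r) (amat p q (- r)) = mid (dimX p q)"
  unfolding amat_right[abs_def]
  by (auto simp: amat_def Let_def mid_def dimX_def quat_eq_iff cosh_sq_real algebra_simps intro!: ext)

section \<open>The nilpotent group N*\<close>

text \<open>For fixed blocks u, v, w, the matrix N = N_{u,v,w}: its last row equals its first row,
  its last column is the negative of its first column, and its middle block vanishes.
  Consequently N^2 is supported on the four corners and N^3 = 0.\<close>

context fixes p q :: nat and u v :: "nat \<Rightarrow> quat" and w :: quat
begin

abbreviation "Nm \<equiv> Nmat p q u v w"
abbreviation "nd \<equiv> dimX p q"

lemma N_supp: "supp nd Nm" by (simp add: supp_def Nmat_def Let_def)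
lemma N_last_row: "Nm (lst p q) j = Nm 0 j" by (simp add: Nmat_def Let_def dimX_def)
lemma N_last_col: "Nm i (lst p q) = - Nm i 0" by (auto simp: Nmat_def Let_def dimX_def)
lemma N_middle: "0 < k \<Longrightarrow> k < lst p q \<Longrightarrow> i \<noteq> 0 \<Longrightarrow> i \<noteq> lst p q \<Longrightarrow> Nm i k = 0 \<and> Nm k i = 0"
  by (auto simp: Nmat_def Let_def dimX_def)
lemma N_entries:
  "Nm 0 0 = - w"
  "k < p \<Longrightarrow> Nm 0 (Suc k) = u k" "k < p \<Longrightarrow> Nm (Suc k) 0 = - qcnj (u k)"
  "k < q \<Longrightarrow> Nm 0 (Suc (k+p)) = v k" "k < q \<Longrightarrow> Nm (Suc (k+p)) 0 = qcnj (v k)"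
  by (auto simp: Nmat_def Let_def dimX_def)

definition Nsq_scalar :: quat where
  "Nsq_scalar = qreal ((\<Sum>k<p. qnorm2 (u k)) - (\<Sum>k<q. qnorm2 (v k)))"

lemma N_sq: "mmul nd Nm Nm i j =
  (if (i = 0 \<or> i = lst p q) \<and> (j = 0 \<or> j = lst p q) then (if j = 0 then - Nsq_scalar else Nsq_scalar) else 0)"
proof -
  let ?l = "lst p q"
  \<comment> \<open>the contributions of the first and the last index cancel\<close>
  have outer: "Nm i 0 * Nm 0 j + Nm i ?l * Nm ?l j = 0"
    unfolding N_last_row N_last_col by simp
  have split: "mmul nd Nm Nm i j
      = (\<Sum>k<p. Nm i (k+1) * Nm (k+1) j) + (\<Sum>k<q. Nm i (k+p+1) * Nm (k+p+1) j)"
    unfolding mmul_def sum_dimX_blocks using outer by (simp add: add.assoc)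
  show ?thesis
  proof (cases "(i = 0 \<or> i = ?l) \<and> (j = 0 \<or> j = ?l)")
    case True
    then have rows: "Nm i k = Nm 0 k" for k using N_last_row by auto
    have corner: "(\<Sum>k<p. Nm 0 (k+1) * Nm (k+1) 0) + (\<Sum>k<q. Nm 0 (k+p+1) * Nm (k+p+1) 0) = - Nsq_scalar"
      by (simp add: N_entries Nsq_scalar_def qcnj_mult_self qreal_sum sum_negf)
    show ?thesis using True
    proof (cases "j = 0")
      case False
      then have "Nm k j = - Nm k 0" for k using True N_last_col by auto
      moreover have "- (\<Sum>k<p. Nm 0 (k+1) * Nm (k+1) 0) - (\<Sum>k<q. Nm 0 (k+p+1) * Nm (k+p+1) 0)
          = Nsq_scalar"
        using arg_cong[OF corner, of uminus] by simp
      ultimately show ?thesis using False True unfolding split rows by (simp add: sum_negf)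
    qed (use corner split rows in simp)
  next
    case False
    then have "Nm i k * Nm k j = 0" if "0 < k" "k < ?l" for k
      using N_middle[OF that] by auto
    then show ?thesis unfolding split using False by (auto simp: dimX_def)
  qed
qed

lemma N_sq_last_row: "mmul nd Nm Nm (lst p q) j = mmul nd Nm Nm 0 j"
  by (simp add: N_sq)

lemma N_cube: "mmul nd Nm (mmul nd Nm Nm) = mzero"
proof (intro ext)
  fix i j
  have "mmul nd Nm (mmul nd Nm Nm) i j = (\<Sum>k<nd. if k = 0 then Nm i 0 * mmul nd Nm Nm 0 j
      else if k = lst p q then Nm i (lst p q) * mmul nd Nm Nm (lst p q) j else 0)"
    unfolding mmul_def[of nd Nm "mmul nd Nm Nm"] by (intro sum.cong refl) (auto simp: N_sq)
  also have "\<dots> = Nm i 0 * mmul nd Nm Nm 0 j + Nm i (lst p q) * mmul nd Nm Nm (lst p q) j"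
    by (rule sum_two) (auto simp: dimX_def)
  also have "\<dots> = 0" by (simp add: N_sq_last_row N_last_col)
  finally show "mmul nd Nm (mmul nd Nm Nm) i j = mzero i j" by (simp add: mzero_def)
qed

definition expN :: qmat where
  "expN = madd (madd (mid nd) Nm) (msc (1/2) (mmul nd Nm Nm))"

lemma mexp_nil_expN: "mexp_nil nd Nm = expN"
proof (intro ext)
  fix i j
  have vanish: "mpow nd Nm k = mzero" if "3 \<le> k" for k
    using that
  proof (induction k rule: dec_induct)
    case base
    then show ?case
      by (simp add: mpow_def numeral_3_eq_3 mmul_mid_right N_supp N_cube)
  qed (simp add: mpow_def)
  have "mexp_nil nd Nm i j = (\<Sum>k<3. qsc (1 / fact k) (mpow nd Nm k i j))"
    unfolding mexp_nil_def
  proof (rule sum.mono_neutral_right)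
    show "{..<3} \<subseteq> {..nd}" by (auto simp: dimX_def)
  qed (auto simp: vanish mzero_def)
  also have "\<dots> = expN i j"
    by (simp add: numeral_3_eq_3 mpow_def mmul_mid_right N_supp expN_def madd_def msc_def)
  finally show "mexp_nil nd Nm i j = expN i j" .
qed

lemma supp_expN: "supp nd expN"
  unfolding expN_def by (intro supp_madd supp_msc supp_mmul supp_mid N_supp)

text \<open>For imaginary w, N lies in the Lie algebra of G, i.e. N* J = - J N.\<close>
lemma N_lie:
  assumes "qre w = 0"
  shows "mmul nd (adj Nm) (Jm p q) = mneg (mmul nd (Jm p q) Nm)"
proof (intro ext)
  fix i j
  have cw: "qcnj w = - w" using assms by (simp add: quat_eq_iff)
  show "mmul nd (adj Nm) (Jm p q) i j = mneg (mmul nd (Jm p q) Nm) i j"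
    unfolding Jm_right Jm_left mneg_def adj_def
    by (auto simp: Nmat_def Let_def dimX_def sg_def cw)
qed

definition expmN :: qmat where
  "expmN = madd (msub (mid nd) Nm) (msc (1/2) (mmul nd Nm Nm))"

lemma expmN_expN: "mmul nd expmN expN = mid nd"
proof -
  let ?N2 = "mmul nd Nm Nm"
  have N3: "mmul nd Nm ?N2 = mzero" by (rule N_cube)
  have N3': "mmul nd ?N2 Nm = mzero" by (simp add: mmul_assoc N_cube)
  have N4: "mmul nd ?N2 ?N2 = mzero" by (simp add: mmul_assoc N3[unfolded mmul_assoc[symmetric]] N3)
  have NE: "mmul nd Nm expN = madd Nm ?N2"
    by (simp add: expN_def mmul_madd_right mmul_msc_right mmul_mid_right N_supp N3)
      (simp add: msc_def mzero_def madd_def)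
  have N2E: "mmul nd ?N2 expN = ?N2"
    by (simp add: expN_def mmul_madd_right mmul_msc_right mmul_mid_right supp_mmul N_supp N3' N4)
      (simp add: msc_def mzero_def madd_def)
  have "mmul nd expmN expN = madd (msub expN (madd Nm ?N2)) (msc (1/2) ?N2)"
    by (simp add: expmN_def mmul_madd_left mmul_msub_left mmul_msc_left mmul_mid_left supp_expN NE N2E)
  also have "\<dots> = mid nd"
    by (auto simp: expN_def madd_def msub_def msc_def quat_eq_iff intro!: ext)
  finally show ?thesis .
qed

lemma adj_expN_Jm:
  assumes w: "qre w = 0"
  shows "mmul nd (adj expN) (Jm p q) = mmul nd (Jm p q) expmN"
proof -
  let ?J = "Jm p q" and ?N2 = "mmul nd Nm Nm"
  have lie: "mmul nd (adj Nm) ?J = mneg (mmul nd ?J Nm)" by (rule N_lie[OF w])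
  have J1: "mmul nd (mid nd) ?J = ?J" "mmul nd ?J (mid nd) = ?J"
    by (simp_all add: mmul_mid_left mmul_mid_right)
  have sq: "mmul nd (mmul nd (adj Nm) (adj Nm)) ?J = mmul nd ?J ?N2"
    by (simp add: mmul_assoc lie mmul_mneg_right mmul_mneg_left
        flip: mmul_assoc[of nd "adj Nm" ?J Nm])
      (simp add: mneg_def mmul_assoc)
  have "adj expN = madd (madd (mid nd) (adj Nm)) (msc (1/2) (mmul nd (adj Nm) (adj Nm)))"
    by (simp add: expN_def adj_madd adj_msc adj_mmul)
  then have "mmul nd (adj expN) ?J = madd (madd ?J (mneg (mmul nd ?J Nm))) (msc (1/2) (mmul nd ?J ?N2))"
    by (simp add: mmul_madd_left mmul_msc_left J1 lie sq)
  also have "\<dots> = mmul nd ?J expmN"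
    by (simp add: expmN_def mmul_madd_right mmul_msub_right mmul_msc_right J1)
      (simp add: madd_def msub_def mneg_def)
  finally show ?thesis .
qed

lemma expN_preserves_form:
  assumes "qre w = 0"
  shows "mmul nd (mmul nd (adj expN) (Jm p q)) expN = Jm p q"
  by (simp add: adj_expN_Jm[OF assms] mmul_assoc expmN_expN mmul_mid_right)

end

section \<open>Quaternionic unitary matrices with a prescribed column\<close>

lemma unit_phase:
  assumes "inF d x"
  obtains \<beta> where "qcnj \<beta> * \<beta> = 1" "\<beta> * qcnj \<beta> = 1" "inF d \<beta>"
    "qcnj \<beta> * x = qreal (sqrt (qnorm2 x))"
proof (cases "x = 0")
  case True
  then show ?thesis by (intro that[of 1]) (auto intro: inF_simps)
next
  case False
  define s where "s = sqrt (qnorm2 x)"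
  have s: "s > 0" using False by (simp add: s_def qnorm2_eq_0 order_less_le)
  define \<beta> where "\<beta> = qsc (1 / s) x"
  have "qnorm2 \<beta> = 1"
    using s by (simp add: \<beta>_def s_def qnorm2_qsc power_divide)
  moreover have "qcnj \<beta> * x = qreal s"
  proof -
    have "qcnj \<beta> * x = qsc (1/s) (qreal (s\<^sup>2))"
      by (simp add: \<beta>_def qsc_mult qcnj_mult_self s_def)
    then show ?thesis using s by (simp add: quat_eq_iff power2_eq_square)
  qed
  moreover have "inF d \<beta>" using assms by (simp add: \<beta>_def inF_simps)
  ultimately show ?thesis by (intro that) (simp_all add: qcnj_mult_self s_def)
qed

text \<open>The Householder reflection along the vector v (the identity when v = 0).\<close>
definition reflection :: "nat \<Rightarrow> (nat \<Rightarrow> quat) \<Rightarrow> qmat" where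
  "reflection n v = msub (mid n) (msc (2 / (\<Sum>i<n. qnorm2 (v i))) (\<lambda>i j. v i * qcnj (v j)))"

lemma reflection_outside: "v i = 0 \<or> v j = 0 \<Longrightarrow> reflection n v i j = mid n i j"
  by (auto simp: reflection_def msub_def msc_def)

text \<open>The reflection is self-adjoint and involutive, hence unitary.\<close>
lemma reflection_unitary:
  assumes v: "\<And>i. n \<le> i \<Longrightarrow> v i = 0" and vF: "\<And>i. inF d (v i)"
  shows "unitary d n (reflection n v)"
proof -
  define nv where "nv = (\<Sum>i<n. qnorm2 (v i))"
  define V where "V = (\<lambda>i j. v i * qcnj (v j))"
  have R: "reflection n v = msub (mid n) (msc (2 / nv) V)"
    by (simp add: reflection_def nv_def V_def)
  have suppV: "supp n V" by (simp add: supp_def V_def v)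
  have VV: "mmul n V V = msc nv V"
  proof (intro ext)
    fix i j
    have "mmul n V V i j = v i * (\<Sum>k<n. qcnj (v k) * v k) * qcnj (v j)"
      by (simp add: mmul_def V_def sum_distrib_left sum_distrib_right mult.assoc)
    also have "(\<Sum>k<n. qcnj (v k) * v k) = qreal nv"
      by (simp add: nv_def qcnj_mult_self qreal_sum)
    finally show "mmul n V V i j = msc nv V i j"
      by (simp add: msc_def V_def qsc_def'' qreal_comm mult.assoc)
  qed
  have self_adj: "adj (reflection n v) = reflection n v"
    by (simp add: R adj_msub adj_msc) (simp add: adj_def V_def)
  have supp: "supp n (reflection n v)"
    by (simp add: R supp_def msub_def msc_def mid_def suppV[unfolded supp_def])
  have involution: "mmul n (reflection n v) (reflection n v) = mid n"
    unfolding R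
    by (simp add: mmul_msub_left mmul_msub_right mmul_msc_left mmul_msc_right mmul_mid_left
        mmul_mid_right suppV supp_msc VV)
      (cases "nv = 0"; auto simp: msub_def msc_def quat_eq_iff field_simps intro!: ext)
  have "inF d (reflection n v i j)" for i j
    by (auto simp: R msub_def msc_def V_def mid_def intro!: inF_simps vF)
  then show ?thesis using self_adj supp involution by (simp add: unitary_def)
qed

lemma reflection_maps:
  assumes a: "\<And>i. n \<le> i \<Longrightarrow> a i = 0" and b: "\<And>i. n \<le> i \<Longrightarrow> b i = 0"
    and na: "(\<Sum>i<n. qnorm2 (a i)) = 1" and nb: "(\<Sum>i<n. qnorm2 (b i)) = 1"
    and ab: "(\<Sum>i<n. qcnj (a i) * b i) = qreal s"
  shows "(\<Sum>k<n. reflection n (\<lambda>i. a i - b i) i k * a k) = b i"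
proof -
  define v where "v i = a i - b i" for i
  define nv where "nv = (\<Sum>i<n. qnorm2 (v i))"
  have nv: "nv = 2 * (1 - s)"
  proof -
    have "nv = (\<Sum>i<n. qnorm2 (a i)) + (\<Sum>i<n. qnorm2 (b i)) - 2 * (\<Sum>i<n. qre (qcnj (a i) * b i))"
      by (simp add: nv_def v_def qnorm2_diff sum.distrib sum_subtractf sum_distrib_left)
    moreover have "(\<Sum>i<n. qre (qcnj (a i) * b i)) = s"
      using arg_cong[OF ab, of qre] by (simp only: quat_sum_simps quat_simps)
    ultimately show ?thesis using na nb by simp
  qed
  have va: "(\<Sum>k<n. qcnj (v k) * a k) = qreal (1 - s)"
  proof -
    have "(\<Sum>k<n. qcnj (b k) * a k) = qreal s" using arg_cong[OF ab, of qcnj] by simp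
    moreover have "(\<Sum>k<n. qcnj (a k) * a k) = 1"
      using na by (simp add: qcnj_mult_self flip: qreal_sum)
    ultimately show ?thesis by (simp add: v_def left_diff_distrib sum_subtractf)
  qed
  have "(\<Sum>k<n. reflection n v i k * a k)
      = (\<Sum>k<n. mid n i k * a k) - qsc (2 / nv) (v i * (\<Sum>k<n. qcnj (v k) * a k))"
    by (simp add: reflection_def msub_def msc_def nv_def left_diff_distrib sum_subtractf
        qsc_mult qsc_sum sum_distrib_left mult.assoc)
  also have "(\<Sum>k<n. mid n i k * a k) = a i"
    using a by (cases "i < n") (simp_all add: mid_def if_distrib[of "\<lambda>x. x * _"] cong: if_cong)
  also have "qsc (2 / nv) (v i * (\<Sum>k<n. qcnj (v k) * a k)) = v i"
  proof (cases "nv = 0")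
    case True
    have "v k = 0" for k
      using qnorm2_sum_zero[of "{..<n}" v k] True a b by (cases "k < n") (auto simp: nv_def v_def)
    then show ?thesis by simp
  next
    case False
    then show ?thesis by (simp add: va nv quat_eq_iff field_simps)
  qed
  finally show ?thesis by (simp add: v_def)
qed

definition phase :: "nat \<Rightarrow> nat \<Rightarrow> quat \<Rightarrow> qmat" where
  "phase n i0 \<beta> = (\<lambda>i j. if i = j \<and> i < n then (if i = i0 then \<beta> else 1) else 0)"

lemma mmul_phase_right:
  "mmul n X (phase n i0 \<beta>) i j = (if j < n then X i j * (if j = i0 then \<beta> else 1) else 0)"
proof -
  have "mmul n X (phase n i0 \<beta>) i j = (\<Sum>k<n. if k = j then X i j * (if j = i0 then \<beta> else 1) else 0)"
    unfolding mmul_def phase_def by (intro sum.cong) auto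
  then show ?thesis by simp
qed

lemma mmul_phase_left:
  "mmul n (phase n i0 \<beta>) X i j = (if i < n then (if i = i0 then \<beta> else 1) * X i j else 0)"
proof -
  have "mmul n (phase n i0 \<beta>) X i j = (\<Sum>k<n. if k = i then (if i = i0 then \<beta> else 1) * X i j else 0)"
    unfolding mmul_def phase_def by (intro sum.cong) auto
  then show ?thesis by simp
qed

lemma phase_unitary:
  assumes "qcnj \<beta> * \<beta> = 1" "\<beta> * qcnj \<beta> = 1" "inF d \<beta>"
  shows "unitary d n (phase n i0 \<beta>)"
proof -
  have "mmul n (adj (phase n i0 \<beta>)) (phase n i0 \<beta>) = mid n"
    by (intro ext, simp only: mmul_phase_right) (auto simp: adj_def phase_def mid_def assms)
  moreover have "mmul n (phase n i0 \<beta>) (adj (phase n i0 \<beta>)) = mid n"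
    by (intro ext, simp only: mmul_phase_left) (auto simp: adj_def phase_def mid_def assms)
  ultimately show ?thesis
    using assms(3) by (auto simp: unitary_def supp_def phase_def intro: inF_simps)
qed

text \<open>Any unit vector b with entries in F, supported on an index block B, is the i0-th column of
  a unitary matrix that acts as the identity outside B: reflect beta e_{i0} onto b, where the
  phase beta makes the inner product of the two vectors real.\<close>
lemma unitary_with_column:
  assumes B: "B \<subseteq> {..<n}" and i0: "i0 \<in> B"
    and bB: "\<And>i. i \<notin> B \<Longrightarrow> b i = 0"
    and bB1: "(\<Sum>i\<in>B. qnorm2 (b i)) = 1"
    and bF: "\<And>i. inF d (b i)"
  shows "\<exists>U. unitary d n U \<and> (\<forall>i j. i \<notin> B \<or> j \<notin> B \<longrightarrow> U i j = mid n i j) \<and> (\<forall>i. U i i0 = b i)"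
proof -
  have i0n: "i0 < n" using B i0 by auto
  have bge: "n \<le> i \<Longrightarrow> b i = 0" for i using B bB by (meson lessThan_iff not_le subsetD)
  have bn: "(\<Sum>i<n. qnorm2 (b i)) = 1"
  proof -
    have "(\<Sum>i<n. qnorm2 (b i)) = (\<Sum>i\<in>B. qnorm2 (b i))"
      using B bB by (intro sum.mono_neutral_right) auto
    then show ?thesis using bB1 by simp
  qed
  obtain \<beta> where \<beta>: "qcnj \<beta> * \<beta> = 1" "\<beta> * qcnj \<beta> = 1" "inF d \<beta>"
    and \<beta>b: "qcnj \<beta> * b i0 = qreal (sqrt (qnorm2 (b i0)))"
    using unit_phase[OF bF] by blast
  define a where "a i = (if i = i0 then \<beta> else 0)" for i
  define U where "U = mmul n (reflection n (\<lambda>i. a i - b i)) (phase n i0 \<beta>)"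
  have vB: "i \<notin> B \<Longrightarrow> a i - b i = 0" for i using bB i0 by (auto simp: a_def)
  have age: "n \<le> i \<Longrightarrow> a i = 0" for i using i0n by (auto simp: a_def)
  have aF: "inF d (a i)" for i using \<beta>(3) by (simp add: a_def inF_simps)
  have "unitary d n U"
    unfolding U_def
    by (intro unitary_mmul reflection_unitary phase_unitary \<beta>) (simp_all add: age bge aF bF inF_simps)
  moreover have "U i j = mid n i j" if "i \<notin> B \<or> j \<notin> B" for i j
    using that i0 vB reflection_outside[of "\<lambda>i. a i - b i"]
    by (auto simp: U_def mmul_phase_right mid_def)
  moreover have "U i i0 = b i" for i
  proof -
    have "qnorm2 \<beta> = 1" using arg_cong[OF \<beta>(1), of qre] by (simp add: qcnj_mult_self)
    then have "(\<Sum>k<n. qnorm2 (a k)) = 1"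
      using i0n by (simp add: a_def if_distrib[of qnorm2] cong: if_cong)
    moreover have "(\<Sum>k<n. qcnj (a k) * b k) = qreal (sqrt (qnorm2 (b i0)))"
      using i0n \<beta>b by (simp add: a_def if_distrib[of "\<lambda>x. qcnj x * _"] cong: if_cong)
    ultimately have "(\<Sum>k<n. reflection n (\<lambda>i. a i - b i) i k * a k) = b i"
      by (intro reflection_maps age bge bn)
    moreover have "(\<Sum>k<n. reflection n (\<lambda>i. a i - b i) i k * a k) = U i i0"
      using i0n by (simp add: U_def mmul_phase_right a_def if_distrib[of "\<lambda>x. _ * x"] cong: if_cong)
    ultimately show ?thesis by simp
  qed
  ultimately show ?thesis by blast
qed

section \<open>The decomposition G = K A H and the function psi-tilde\<close>

lemma normalize_block:
  assumes B: "finite B" "i0 \<in> B" and xF: "\<And>i. inF d (x i)"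
  obtains b where "\<And>i. i \<notin> B \<Longrightarrow> b i = 0" "(\<Sum>i\<in>B. qnorm2 (b i)) = 1" "\<And>i. inF d (b i)"
    "\<And>i. i \<in> B \<Longrightarrow> x i = b i * qreal (sqrt (\<Sum>i\<in>B. qnorm2 (x i)))"
proof (cases "(\<Sum>i\<in>B. qnorm2 (x i)) = 0")
  case True
  have "x i = 0" if "i \<in> B" for i by (rule qnorm2_sum_zero[OF B(1) True that])
  then show ?thesis
    using B True by (intro that[of "\<lambda>i. if i = i0 then 1 else 0"])
      (auto simp: if_distrib[of qnorm2] inF_simps cong: if_cong)
next
  case False
  define S where "S = sqrt (\<Sum>i\<in>B. qnorm2 (x i))"
  have S: "S > 0" using False by (simp add: S_def order_less_le sum_nonneg)
  show ?thesis
  proof (rule that[of "\<lambda>i. if i \<in> B then qsc (1 / S) (x i) else 0"])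
    have "(\<Sum>i\<in>B. qnorm2 (qsc (1 / S) (x i))) = (1 / S)\<^sup>2 * (\<Sum>i\<in>B. qnorm2 (x i))"
      by (simp add: qnorm2_qsc sum_distrib_left)
    also have "\<dots> = 1" using S by (simp add: S_def power_divide sum_nonneg)
    finally show "(\<Sum>i\<in>B. qnorm2 (if i \<in> B then qsc (1 / S) (x i) else 0)) = 1" by simp
    show "x i = (if i \<in> B then qsc (1 / S) (x i) else 0) * qreal (sqrt (\<Sum>i\<in>B. qnorm2 (x i)))"
      if "i \<in> B" for i
      using that S by (simp add: S_def[symmetric] quat_eq_iff)
  qed (auto intro: inF_simps xF)
qed

lemma block_diag_Jm_commute:
  assumes "supp (dimX p q) k" "\<And>i j. (i \<le> p \<and> p < j) \<or> (p < i \<and> j \<le> p) \<Longrightarrow> k i j = 0"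
  shows "mmul (dimX p q) (Jm p q) k = mmul (dimX p q) k (Jm p q)"
  using assms by (intro ext) (auto simp: Jm_left Jm_right sg_def supp_def)

lemma Kset_adj_Gset:
  assumes kK: "k \<in> Kset d p q" and k: "unitary d (dimX p q) k"
  shows "adj k \<in> Gset d p q"
proof (rule unitary_Gset)
  show "unitary d (dimX p q) (adj k)"
    using k supp_adj[of "dimX p q" k] by (auto simp: unitary_def adj_def inF_simps)
  have "mmul (dimX p q) (Jm p q) k = mmul (dimX p q) k (Jm p q)"
    using kK by (intro block_diag_Jm_commute) (auto simp: Kset_def Gset_iff)
  then show "mmul (dimX p q) (Jm p q) (adj k) = mmul (dimX p q) (adj k) (Jm p q)"
    by (metis adj_mmul adj_simps(3))
qed

lemma K_with_columns:
  assumes b1: "\<And>i. i \<notin> {..<Suc p} \<Longrightarrow> b1 i = 0" "(\<Sum>i\<in>{..<Suc p}. qnorm2 (b1 i)) = 1"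
      "\<And>i. inF d (b1 i)"
    and b2: "\<And>i. i \<notin> {Suc p..<dimX p q} \<Longrightarrow> b2 i = 0"
      "(\<Sum>i\<in>{Suc p..<dimX p q}. qnorm2 (b2 i)) = 1" "\<And>i. inF d (b2 i)"
  shows "\<exists>k \<in> Kset d p q. unitary d (dimX p q) k \<and> (\<forall>i. k i 0 = b1 i \<and> k i (lst p q) = b2 i)"
proof -
  let ?n = "dimX p q" and ?l = "lst p q" and ?B1 = "{..<Suc p}" and ?B2 = "{Suc p..<dimX p q}"
  have blocks: "?B1 \<subseteq> {..<?n}" "0 \<in> ?B1" "?B2 \<subseteq> {..<?n}" "?l \<in> ?B2"
    by (auto simp: dimX_def)
  obtain U1 where U1: "unitary d ?n U1" "\<And>i j. i \<notin> ?B1 \<or> j \<notin> ?B1 \<Longrightarrow> U1 i j = mid ?n i j"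
    "\<And>i. U1 i 0 = b1 i"
    using unitary_with_column[OF blocks(1,2) b1] by blast
  obtain U2 where U2: "unitary d ?n U2" "\<And>i j. i \<notin> ?B2 \<or> j \<notin> ?B2 \<Longrightarrow> U2 i j = mid ?n i j"
    "\<And>i. U2 i ?l = b2 i"
    using unitary_with_column[OF blocks(3,4) b2] by blast
  define k where "k = mmul ?n U1 U2"
  have k: "unitary d ?n k" unfolding k_def by (rule unitary_mmul[OF U1(1) U2(1)])
  have supp: "supp ?n U1" "supp ?n U2" using U1(1) U2(1) by (simp_all add: unitary_def)
  \<comment> \<open>U1 and U2 act on complementary blocks, so k is block diagonal\<close>
  have block: "k i j = 0" if "(i \<le> p \<and> p < j) \<or> (p < i \<and> j \<le> p)" for i j
    unfolding k_def mmul_def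
  proof (intro sum.neutral ballI)
    fix m
    show "U1 i m * U2 m j = 0"
      using that U1(2)[of i m] U2(2)[of m j] by (cases "m \<le> p") (auto simp: mid_def)
  qed
  have "k i 0 = b1 i" for i
    unfolding k_def using U1(3) U2(2) by (subst mmul_col_mid[OF supp(1)]) auto
  moreover have "k i ?l = b2 i" for i
  proof -
    have "k i ?l = mmul ?n (mid ?n) U2 i ?l" unfolding k_def mmul_def
    proof (intro sum.cong refl)
      fix m show "U1 i m * U2 m ?l = mid ?n i m * U2 m ?l"
        using U1(2)[of i m] U2(2)[of m ?l] by (cases "m \<le> p") (auto simp: dimX_def mid_def)
    qed
    then show ?thesis by (simp add: mmul_mid_left supp(2) U2(3))
  qed
  moreover have "k \<in> Kset d p q"
  proof -
    have "mmul ?n (Jm p q) k = mmul ?n k (Jm p q)"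
      using k block by (intro block_diag_Jm_commute) (auto simp: unitary_def)
    then show ?thesis using block unitary_Gset[OF k] by (simp add: Kset_def)
  qed
  ultimately show ?thesis using k by blast
qed

lemma sum_lower_block: "(\<Sum>i\<in>{Suc p..<dimX p q}. f i) = (\<Sum>t<Suc q. f (t + Suc p))"
  using sum.shift_bounds_nat_ivl[of f 0 "Suc p" "Suc q"]
  by (simp add: dimX_def lessThan_atLeast0 add.commute)

text \<open>The last column x of g in G splits as x = k e_0 sinh r + k e_last cosh r with k in K:
  the two blocks of x have squared norms sinh(r)^2 and cosh(r)^2 by the form identity.\<close>
lemma last_col_K:
  assumes g: "g \<in> Gset d p q"
  shows "\<exists>k \<in> Kset d p q. \<exists>r. unitary d (dimX p q) k \<and>
     (\<forall>j. g j (lst p q) = k j 0 * qreal (sinh r) + k j (lst p q) * qreal (cosh r))"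
proof -
  let ?n = "dimX p q" and ?l = "lst p q" and ?B1 = "{..<Suc p}" and ?B2 = "{Suc p..<dimX p q}"
  have gF: "inF d (g i j)" for i j using g by (simp add: Gset_iff)
  define A where "A = (\<Sum>i\<in>?B1. qnorm2 (g i ?l))"
  have L: "(\<Sum>i\<in>?B2. qnorm2 (g i ?l)) = A + 1"
    using last_col_norm[OF g] by (simp add: A_def sum_lower_block)
  have A0: "A \<ge> 0" by (simp add: A_def sum_nonneg)
  have blocks: "finite ?B1" "0 \<in> ?B1" "finite ?B2" "?l \<in> ?B2" by (auto simp: dimX_def)
  obtain b1 where b1: "\<And>i. i \<notin> ?B1 \<Longrightarrow> b1 i = 0" "(\<Sum>i\<in>?B1. qnorm2 (b1 i)) = 1" "\<And>i. inF d (b1 i)"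
    "\<And>i. i \<in> ?B1 \<Longrightarrow> g i ?l = b1 i * qreal (sqrt A)"
    using normalize_block[OF blocks(1,2), of d "\<lambda>i. g i ?l"] gF unfolding A_def by blast
  obtain b2 where b2: "\<And>i. i \<notin> ?B2 \<Longrightarrow> b2 i = 0" "(\<Sum>i\<in>?B2. qnorm2 (b2 i)) = 1" "\<And>i. inF d (b2 i)"
    "\<And>i. i \<in> ?B2 \<Longrightarrow> g i ?l = b2 i * qreal (sqrt (A + 1))"
    using normalize_block[OF blocks(3,4), of d "\<lambda>i. g i ?l"] gF unfolding L by blast
  obtain k where k: "k \<in> Kset d p q" "unitary d ?n k" "\<And>i. k i 0 = b1 i" "\<And>i. k i ?l = b2 i"
    using K_with_columns[OF b1(1-3) b2(1-3)] by blast
  define r where "r = arsinh (sqrt A)"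
  have r: "sinh r = sqrt A" "cosh r = sqrt (A + 1)"
    using A0 by (simp_all add: r_def cosh_arsinh_real)
  have "g j ?l = k j 0 * qreal (sinh r) + k j ?l * qreal (cosh r)" for j
  proof (cases "j < ?n")
    case False
    then show ?thesis using g k(3,4) b1(1) b2(1) by (simp add: Gset_iff supp_def dimX_def)
  qed (cases "j \<le> p"; simp add: k(3,4) b1(1,4) b2(1,4) r)
  then show ?thesis using k(1,2) by blast
qed

lemma decomp_exists:
  assumes g: "g \<in> Gset d p q"
  shows "\<exists>k\<in>Kset d p q. \<exists>r. \<exists>h\<in>Hset d p q. g = mmul (dimX p q) (mmul (dimX p q) k (amat p q r)) h"
proof -
  let ?n = "dimX p q" and ?l = "lst p q"
  obtain k r where kK: "k \<in> Kset d p q" and k: "unitary d ?n k"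
    and col: "\<And>j. g j ?l = k j 0 * qreal (sinh r) + k j ?l * qreal (cosh r)"
    using last_col_K[OF g] by blast
  have gs: "supp ?n g" using g by (simp add: Gset_iff)
  have ak: "adj k \<in> Gset d p q" by (rule Kset_adj_Gset[OF kK k])
  define h where "h = mmul ?n (amat p q (- r)) (mmul ?n (adj k) g)"
  have "h \<in> Hset d p q"
  proof -
    have "mmul ?n (adj k) g m ?l = mid ?n m 0 * qreal (sinh r) + mid ?n m ?l * qreal (cosh r)" for m
    proof -
      have "mmul ?n (adj k) g m ?l = mmul ?n (adj k) k m 0 * qreal (sinh r) + mmul ?n (adj k) k m ?l * qreal (cosh r)"
        by (simp add: mmul_def col distrib_left sum.distrib sum_distrib_right mult.assoc)
      then show ?thesis using k by (simp add: unitary_def)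
    qed
    then have "h i ?l = 0" if "i < ?l" for i
      using that unfolding h_def amat_left
      by (auto simp: mid_def dimX_def quat_eq_iff)
    moreover have "h \<in> Gset d p q" unfolding h_def by (intro Gset_mmul amat_G ak g)
    ultimately show ?thesis by (auto simp: Hset_def dimX_def)
  qed
  moreover have "mmul ?n (mmul ?n k (amat p q r)) h = g"
  proof -
    have "mmul ?n (mmul ?n k (amat p q r)) h
        = mmul ?n k (mmul ?n (mmul ?n (amat p q r) (amat p q (- r))) (mmul ?n (adj k) g))"
      by (simp add: h_def mmul_assoc)
    also have "\<dots> = mmul ?n k (mmul ?n (adj k) g)"
      using k by (simp add: amat_inv mmul_mid_left supp_mmul supp_adj gs unitary_def)
    also have "\<dots> = mmul ?n (mmul ?n k (adj k)) g" by (simp only: mmul_assoc)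
    also have "\<dots> = g" using k by (simp add: mmul_mid_left gs unitary_def)
    finally show ?thesis .
  qed
  ultimately show ?thesis using kK by metis
qed

text \<open>In a decomposition g = k a_r h, cosh(r)^2 is determined by g: H fixes the last line up to
  a unit scalar, a_r moves e_last to e_0 sinh r + e_last cosh r, and K preserves the norm of
  the lower block.\<close>
lemma decomp_unique:
  assumes k: "k \<in> Kset d p q" and h: "h \<in> Hset d p q"
    and g: "g = mmul (dimX p q) (mmul (dimX p q) k (amat p q r)) h"
  shows "lower_norm p q g = (cosh r)\<^sup>2"
proof -
  let ?n = "dimX p q" and ?l = "lst p q"
  have kG: "k \<in> Gset d p q" and kb: "\<And>i j. (i \<le> p \<and> p < j) \<or> (p < i \<and> j \<le> p) \<Longrightarrow> k i j = 0"
    using k by (auto simp: Kset_def)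
  have hG: "h \<in> Gset d p q" and hH: "\<And>i. i < ?l \<Longrightarrow> h i ?l = 0"
    using h by (auto simp: Hset_def dimX_def)
  define \<alpha> where "\<alpha> = h ?l ?l"
  have hcol: "h i ?l = (if i = ?l then \<alpha> else 0)" for i
  proof (cases "i < ?l")
    case False
    then have "i = ?l \<or> ?n \<le> i" by (auto simp: dimX_def)
    then show ?thesis using hG by (auto simp: Gset_iff supp_def \<alpha>_def)
  qed (simp add: hH)
  have \<alpha>: "qnorm2 \<alpha> = 1"
    using last_col_norm[OF hG] by (simp add: hcol dimX_def)
  have gcol: "g i ?l = mmul ?n k (amat p q r) i ?l * \<alpha>" for i
  proof -
    have "g i ?l = (\<Sum>m<?n. if m = ?l then mmul ?n k (amat p q r) i ?l * \<alpha> else 0)"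
      unfolding g mmul_def[of ?n "mmul ?n k (amat p q r)" h] hcol by (intro sum.cong) auto
    then show ?thesis by (simp add: dimX_def)
  qed
  have "lower_norm p q g = (\<Sum>t<Suc q. qnorm2 (k (t + Suc p) ?l) * (cosh r)\<^sup>2)"
    unfolding lower_norm_def
  proof (intro sum.cong refl)
    fix t
    have "k (t + Suc p) 0 = 0" by (intro kb) simp
    then have "g (t + Suc p) ?l = k (t + Suc p) ?l * qreal (cosh r) * \<alpha>"
      unfolding gcol amat_right by (simp add: dimX_def)
    then show "qnorm2 (g (t + Suc p) ?l) = qnorm2 (k (t + Suc p) ?l) * (cosh r)\<^sup>2"
      by (simp add: qnorm2_mult \<alpha>)
  qed
  also have "(\<Sum>t<Suc q. qnorm2 (k (t + Suc p) ?l) * (cosh r)\<^sup>2)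
      = (\<Sum>t<Suc q. qnorm2 (k (t + Suc p) ?l)) * (cosh r)\<^sup>2"
    by (rule sum_distrib_right[symmetric])
  also have "(\<Sum>t<Suc q. qnorm2 (k (t + Suc p) ?l)) = 1"
  proof -
    have "(\<Sum>m<Suc p. qnorm2 (k m ?l)) = 0" by (intro sum.neutral) (auto simp: kb)
    then show ?thesis using last_col_norm[OF kG] by simp
  qed
  finally show ?thesis by simp
qed

text \<open>Hence psi-tilde is well defined on G and given by the lower norm of the last column.\<close>
lemma psi_eval:
  assumes "g \<in> Gset d p q"
  shows "psi d p q lam g = sqrt (lower_norm p q g) powr (- lam - rho_q d p q)"
  unfolding psi_def
proof (rule the_equality)
  have cosh: "sqrt ((cosh r)\<^sup>2) = cosh r" for r :: real
    using cosh_real_pos[of r] by simp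
  obtain k r h where kh: "k \<in> Kset d p q" "h \<in> Hset d p q"
    "g = mmul (dimX p q) (mmul (dimX p q) k (amat p q r)) h"
    using decomp_exists[OF assms] by blast
  then show "\<exists>k\<in>Kset d p q. \<exists>s. \<exists>h\<in>Hset d p q. g = mmul (dimX p q) (mmul (dimX p q) k (amat p q s)) h
      \<and> sqrt (lower_norm p q g) powr (- lam - rho_q d p q) = cosh s powr (- lam - rho_q d p q)"
    using decomp_unique[OF kh] cosh by (intro bexI[of _ k] exI[of _ r] bexI[of _ h]) simp_all
next
  fix c assume "\<exists>k\<in>Kset d p q. \<exists>s. \<exists>h\<in>Hset d p q. g = mmul (dimX p q) (mmul (dimX p q) k (amat p q s)) h
      \<and> c = cosh s powr (- lam - rho_q d p q)"
  then obtain k s h where "k \<in> Kset d p q" "h \<in> Hset d p q"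
    "g = mmul (dimX p q) (mmul (dimX p q) k (amat p q s)) h" and c: "c = cosh s powr (- lam - rho_q d p q)"
    by blast
  then have "lower_norm p q g = (cosh s)\<^sup>2" by (intro decomp_unique)
  then show "c = sqrt (lower_norm p q g) powr (- lam - rho_q d p q)"
    using c cosh_real_pos[of s] by simp
qed

text \<open>The last column of a_s exp(N): its lower block is (-conj v, 1 + w + c/2) up to the
  a_s-rotation of the corner entries, where c is the corner value of N^2.\<close>
lemma lower_norm_amat_expN:
  assumes w: "qre w = 0"
  shows "lower_norm p q (mmul (dimX p q) (amat p q s) (expN p q u v w))
    = (\<Sum>t<q. qnorm2 (v t)) + (cosh s + exp s * ((\<Sum>k<p. qnorm2 (u k)) - (\<Sum>k<q. qnorm2 (v k))) / 2)\<^sup>2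
      + exp (2 * s) * qnorm2 w"
proof -
  let ?n = "dimX p q" and ?l = "lst p q" and ?N = "Nmat p q u v w" and ?E = "expN p q u v w"
  define c where "c = (\<Sum>k<p. qnorm2 (u k)) - (\<Sum>k<q. qnorm2 (v k))"
  have Ecol: "?E i ?l = mid ?n i ?l + ?N i ?l + qsc (1/2) (mmul ?n ?N ?N i ?l)" for i
    by (simp add: expN_def madd_def msc_def)
  have middle: "mmul ?n (amat p q s) ?E (t + Suc p) ?l = - qcnj (v t)" if "t < q" for t
  proof -
    have "mmul ?n (amat p q s) ?E (t + Suc p) ?l = ?E (t + Suc p) ?l"
      unfolding amat_left using that by (simp add: dimX_def)
    also have "\<dots> = - qcnj (v t)"
      unfolding Ecol N_sq N_last_col using that N_entries(5)[where k=t and p=p and q=q and u=u and v=v and w=w]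
      by (simp add: mid_def dimX_def)
    finally show ?thesis .
  qed
  have N0l: "?N 0 ?l = w" and Nll: "?N ?l ?l = w"
    using N_last_col[where i=0 and p=p and q=q and u=u and v=v and w=w]
      N_last_row[where j="lst p q" and p=p and q=q and u=u and v=v and w=w] by (simp_all add: N_entries)
  have corner: "mmul ?n (amat p q s) ?E ?l ?l
      = qreal (sinh s) * (w + qsc (1/2) (qreal c)) + qreal (cosh s) * (1 + w + qsc (1/2) (qreal c))"
    unfolding amat_left Ecol N_sq by (simp add: dimX_def mid_def N0l Nll Nsq_scalar_def c_def)
  have "qnorm2 (mmul ?n (amat p q s) ?E ?l ?l) = (cosh s + exp s * c / 2)\<^sup>2 + exp (2 * s) * qnorm2 w"
  proof -
    have e: "exp s = sinh s + cosh s" by (simp add: sinh_plus_cosh)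
    have e2: "exp (2 * s) = (sinh s + cosh s)\<^sup>2"
      by (simp add: e[symmetric] power2_eq_square flip: exp_add)
    show ?thesis unfolding corner e2 e using w
      by (simp add: qnorm2_def power2_eq_square algebra_simps)
  qed
  moreover have "lower_norm p q (mmul ?n (amat p q s) ?E)
      = (\<Sum>t<q. qnorm2 (mmul ?n (amat p q s) ?E (t + Suc p) ?l)) + qnorm2 (mmul ?n (amat p q s) ?E ?l ?l)"
    by (simp add: lower_norm_def add.commute)
  moreover have "(\<Sum>t<q. qnorm2 (mmul ?n (amat p q s) ?E (t + Suc p) ?l)) = (\<Sum>t<q. qnorm2 (v t))"
    by (intro sum.cong refl) (simp add: middle[simplified])
  ultimately show ?thesis by (simp add: c_def)
qed

text \<open>The value of lower_norm(a_s n*) in the real coordinates y of N*: the u-block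
  (coordinates below dp), the v'-block (the next d(q-p)) and the Im F-block w (the last d-1).\<close>
definition phi_coord :: "nat \<Rightarrow> nat \<Rightarrow> nat \<Rightarrow> real \<Rightarrow> (nat \<Rightarrow> real) \<Rightarrow> real" where
  "phi_coord d p q s y = (\<Sum>i<d*p. (y i)\<^sup>2) + (\<Sum>i<d*(q-p). (y (d*p+i))\<^sup>2)
     + (cosh s - exp s * (\<Sum>i<d*(q-p). (y (d*p+i))\<^sup>2) / 2)\<^sup>2 + exp (2 * s) * (\<Sum>i<d-1. (y (d*q+i))\<^sup>2)"

lemma nstar_expN: "nstar d p q y = expN p q (u_of d p y) (v_of d p q y) (imof d y (d * q))"
  by (simp add: nstar_def mexp_nil_expN)

lemma nstar_G: "nstar d p q y \<in> Gset d p q"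
proof -
  let ?u = "u_of d p y" and ?v = "v_of d p q y" and ?w = "imof d y (d * q)"
  have coordF: "inF d (qof d y off)" "inF d (imof d y off)" for off
    by (simp_all add: inF_def qof_def imof_def)
  have "inF d (?u i)" "inF d (?v i)" for i
    by (simp_all add: u_of_def v_of_def coordF inF_simps)
  then have NF: "inF d (Nmat p q ?u ?v ?w i j)" for i j
    using coordF by (auto simp: Nmat_def Let_def intro!: inF_simps)
  have "inF d (nstar d p q y i j)" for i j
    unfolding nstar_expN expN_def madd_def msc_def mmul_def mid_def
    by (intro inF_simps inF_sum NF) (auto intro: inF_simps)
  moreover have "qre ?w = 0" by (simp add: imof_def)
  ultimately show ?thesis
    unfolding Gset_iff by (simp add: nstar_expN supp_expN expN_preserves_form)
qed

lemma qnorm2_coords: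
  "d \<in> {1,2,4} \<Longrightarrow> qnorm2 (qof d y off) = (\<Sum>j<d. (y (off + j))\<^sup>2)"
  "d \<in> {1,2,4} \<Longrightarrow> qnorm2 (imof d y off) = (\<Sum>j<d-1. (y (off + j))\<^sup>2)"
  by (auto simp: qnorm2_def qof_def imof_def numeral_eq_Suc)

lemma sum_blocks: "(\<Sum>t<(m::nat). \<Sum>j<d. f ((d::nat)*t + j)) = (\<Sum>i<d*m. f i :: real)"
proof (induction m)
  case (Suc m)
  have "(\<Sum>i<d*Suc m. f i) = (\<Sum>i<d*m + d. f i)" by (simp add: add.commute)
  also have "\<dots> = (\<Sum>i<d*m. f i) + (\<Sum>k<d. f (k + d*m))" by (rule sum_lessThan_add)
  finally show ?case using Suc by (simp add: add.commute)
qed simp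

lemma lower_norm_nstar:
  assumes d: "d \<in> {1,2,4}" and pq: "p \<le> q"
  shows "lower_norm p q (mmul (dimX p q) (amat p q s) (nstar d p q y)) = phi_coord d p q s y"
proof -
  let ?u = "u_of d p y" and ?v = "v_of d p q y" and ?w = "imof d y (d * q)"
  define U where "U = (\<Sum>i<d*p. (y i)\<^sup>2)"
  define V where "V = (\<Sum>i<d*(q-p). (y (d*p+i))\<^sup>2)"
  have Uu: "(\<Sum>k<p. qnorm2 (?u k)) = U"
  proof -
    have "(\<Sum>k<p. qnorm2 (?u k)) = (\<Sum>k<p. \<Sum>j<d. (y (d*k + j))\<^sup>2)"
      by (intro sum.cong refl) (simp add: u_of_def qnorm2_coords[OF d])
    then show ?thesis unfolding U_def using sum_blocks[where f = "\<lambda>i. (y i)\<^sup>2"] by simp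
  qed
  \<comment> \<open>the first p entries of v repeat u (reversed and conjugated), the rest form v'\<close>
  have Vv: "(\<Sum>k<q. qnorm2 (?v k)) = U + V"
  proof -
    have "(\<Sum>k<q. qnorm2 (?v k)) = (\<Sum>k<p. qnorm2 (?v k)) + (\<Sum>m<q-p. qnorm2 (?v (m + p)))"
      using sum_lessThan_add[where a=p and b="q - p"] pq by simp
    also have "(\<Sum>k<p. qnorm2 (?v k)) = (\<Sum>k<p. qnorm2 (?u (p - Suc k)))"
      by (intro sum.cong refl) (simp add: v_of_def)
    also have "\<dots> = (\<Sum>k<p. qnorm2 (?u k))" by (rule sum.nat_diff_reindex)
    also have "(\<Sum>m<q-p. qnorm2 (?v (m + p))) = (\<Sum>m<q-p. \<Sum>j<d. (y (d*p + (d*m + j)))\<^sup>2)"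
      using pq by (intro sum.cong refl) (simp add: v_of_def qnorm2_coords[OF d] add.assoc)
    also have "\<dots> = V" unfolding V_def by (rule sum_blocks[where f = "\<lambda>i. (y (d*p+i))\<^sup>2"])
    finally show ?thesis by (simp add: Uu)
  qed
  have w0: "qre ?w = 0" by (simp add: imof_def)
  show ?thesis
    unfolding nstar_expN lower_norm_amat_expN[OF w0] Uu Vv qnorm2_coords[OF d] phi_coord_def
      U_def[symmetric] V_def[symmetric]
    by (simp add: algebra_simps)
qed

lemma psi_amat_nstar:
  assumes "d \<in> {1,2,4}" "p \<le> q"
  shows "psi d p q lam (mmul (dimX p q) (amat p q s) (nstar d p q y))
     = sqrt (phi_coord d p q s y) powr (- lam - rho_q d p q)"
  using psi_eval[OF Gset_mmul[OF amat_G nstar_G]] lower_norm_nstar[OF assms] by simp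

lemma Radon_psi_formula:
  assumes "d \<in> {1,2,4}" "p \<le> q"
  shows "Radon d p q (psi d p q lam) (amat p q s)
    = (\<integral>y. sqrt (phi_coord d p q s y) powr (- lam - rho_q d p q) \<partial>Pi\<^sub>M {..<ncoord d p q} (\<lambda>_. lborel))"
  unfolding Radon_def by (simp add: psi_amat_nstar[OF assms])

section \<open>Linear changes of variables in product Lebesgue measure\<close>

lemma emeasure_lborel_scale:
  assumes "(c::real) \<noteq> 0" "A \<in> sets borel"
  shows "emeasure lborel ((*) c -` A) = ennreal (inverse \<bar>c\<bar>) * emeasure lborel A"
proof -
  have "emeasure lborel ((*) c -` A) = emeasure (distr lborel borel ((*) c)) A"
    using assms by (simp add: emeasure_distr)
  also have "\<dots> = emeasure (density lborel (\<lambda>_. ennreal (inverse \<bar>c\<bar>))) A"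
    using lborel_distr_mult[OF assms(1)] by simp
  also have "\<dots> = ennreal (inverse \<bar>c\<bar>) * emeasure lborel A"
    using assms by (simp add: emeasure_density_const)
  finally show ?thesis .
qed

text \<open>Permuting the coordinates by sigma and scaling coordinate i by c_i transforms the product
  Lebesgue measure on R^n by the factor prod |c_i|^-1; checked on boxes, which determine it.\<close>
lemma scale_permute_preimage_box:
  fixes \<sigma> :: "nat \<Rightarrow> nat" and c :: "nat \<Rightarrow> real"
  assumes bij: "bij_betw \<sigma> {..<n} {..<n}"
  defines "\<tau> \<equiv> the_inv_into {..<n} \<sigma>"
  shows "(\<lambda>y. restrict (\<lambda>i. c i * y (\<sigma> i)) {..<n}) -` Pi\<^sub>E {..<n} A
      \<inter> space (Pi\<^sub>M {..<n} (\<lambda>_. lborel::real measure))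
    = Pi\<^sub>E {..<n} (\<lambda>j. (*) (c (\<tau> j)) -` A (\<tau> j))"
proof -
  let ?I = "{..<n}"
  have \<sigma>I: "i < n \<Longrightarrow> \<sigma> i < n" for i using bij by (auto simp: bij_betw_def)
  have \<tau>I: "j < n \<Longrightarrow> \<tau> j < n" for j
    using bij_betw_the_inv_into[OF bij] by (auto simp: \<tau>_def bij_betw_def)
  have \<sigma>\<tau>: "j < n \<Longrightarrow> \<sigma> (\<tau> j) = j" and \<tau>\<sigma>: "i < n \<Longrightarrow> \<tau> (\<sigma> i) = i" for i j
    using bij unfolding \<tau>_def by (simp_all add: bij_betw_def f_the_inv_into_f the_inv_into_f_f)
  show ?thesis
  proof (intro set_eqI iffI)
    fix y assume "y \<in> (\<lambda>y. restrict (\<lambda>i. c i * y (\<sigma> i)) ?I) -` Pi\<^sub>E ?I A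
        \<inter> space (Pi\<^sub>M ?I (\<lambda>_. lborel::real measure))"
    then have y: "\<And>i. i < n \<Longrightarrow> c i * y (\<sigma> i) \<in> A i" and ye: "y \<in> extensional ?I"
      by (auto simp: space_PiM PiE_def Pi_iff)
    show "y \<in> Pi\<^sub>E ?I (\<lambda>j. (*) (c (\<tau> j)) -` A (\<tau> j))"
      using y[OF \<tau>I] ye by (auto simp: PiE_def \<sigma>\<tau>)
  next
    fix y assume "y \<in> Pi\<^sub>E ?I (\<lambda>j. (*) (c (\<tau> j)) -` A (\<tau> j))"
    then have y: "\<And>j. j < n \<Longrightarrow> c (\<tau> j) * y j \<in> A (\<tau> j)" and ye: "y \<in> extensional ?I"
      by (auto simp: PiE_def)
    show "y \<in> (\<lambda>y. restrict (\<lambda>i. c i * y (\<sigma> i)) ?I) -` Pi\<^sub>E ?I A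
        \<inter> space (Pi\<^sub>M ?I (\<lambda>_. lborel::real measure))"
      using y[OF \<sigma>I] ye by (auto simp: space_PiM PiE_def \<tau>\<sigma>)
  qed
qed

lemma PiM_lborel_scale_permute:
  fixes \<sigma> :: "nat \<Rightarrow> nat" and c :: "nat \<Rightarrow> real"
  assumes bij: "bij_betw \<sigma> {..<n} {..<n}" and c: "\<And>i. i < n \<Longrightarrow> c i \<noteq> 0"
  shows "density (distr (Pi\<^sub>M {..<n} (\<lambda>_. lborel)) (Pi\<^sub>M {..<n} (\<lambda>_. lborel))
      (\<lambda>y. restrict (\<lambda>i. c i * y (\<sigma> i)) {..<n})) (\<lambda>_. ennreal (\<Prod>i<n. \<bar>c i\<bar>))
    = Pi\<^sub>M {..<n} (\<lambda>_. lborel::real measure)"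
proof -
  let ?I = "{..<n}" and ?M = "Pi\<^sub>M {..<n} (\<lambda>_. lborel::real measure)"
  define T where "T y = restrict (\<lambda>i. c i * y (\<sigma> i)) ?I" for y :: "nat \<Rightarrow> real"
  define K where "K = (\<Prod>i<n. \<bar>c i\<bar>)"
  define \<tau> where "\<tau> = the_inv_into ?I \<sigma>"
  have \<tau>: "bij_betw \<tau> ?I ?I" unfolding \<tau>_def using bij by (rule bij_betw_the_inv_into)
  have \<sigma>I: "i < n \<Longrightarrow> \<sigma> i < n" for i using bij by (auto simp: bij_betw_def)
  have \<tau>I: "j < n \<Longrightarrow> \<tau> j < n" for j using \<tau> by (auto simp: bij_betw_def)
  interpret PS: product_sigma_finite "\<lambda>_. lborel::real measure"
    by (simp add: product_sigma_finite_def sigma_finite_lborel)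
  have Tm[measurable]: "T \<in> measurable ?M ?M"
    unfolding T_def by (rule measurable_restrict) (use \<sigma>I in auto)
  have Kinv: "ennreal K * ennreal (\<Prod>i\<in>?I. inverse \<bar>c i\<bar>) = 1"
  proof -
    have "K * (\<Prod>i\<in>?I. inverse \<bar>c i\<bar>) = 1"
      unfolding K_def prod.distrib[symmetric] using c by (intro prod.neutral) auto
    moreover have "K > 0" unfolding K_def using c by (intro prod_pos) auto
    ultimately show ?thesis by (simp add: ennreal_mult'[symmetric])
  qed
  have "density (distr ?M ?M T) (\<lambda>_. ennreal K) = ?M"
  proof (rule PS.PiM_eqI)
    fix A :: "nat \<Rightarrow> real set" assume A: "\<And>i. i \<in> ?I \<Longrightarrow> A i \<in> sets lborel"
    have Ae: "Pi\<^sub>E ?I A \<in> sets ?M" using A by (auto intro: sets_PiM_I_finite)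
    have pre_meas: "(*) a -` B \<in> sets borel" if "B \<in> sets borel" for a :: real and B
      using measurable_sets[of "(*) a" borel borel B] that by auto
    have pre: "T -` Pi\<^sub>E ?I A \<inter> space ?M = Pi\<^sub>E ?I (\<lambda>j. (*) (c (\<tau> j)) -` A (\<tau> j))"
      unfolding T_def[abs_def] \<tau>_def by (rule scale_permute_preimage_box[OF bij])
    have "emeasure (density (distr ?M ?M T) (\<lambda>_. ennreal K)) (Pi\<^sub>E ?I A)
        = ennreal K * emeasure ?M (T -` Pi\<^sub>E ?I A \<inter> space ?M)"
      using Ae by (simp add: emeasure_density_const emeasure_distr)
    also have "emeasure ?M (T -` Pi\<^sub>E ?I A \<inter> space ?M)
        = (\<Prod>j\<in>?I. emeasure lborel ((*) (c (\<tau> j)) -` A (\<tau> j)))"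
      unfolding pre using A \<tau>I pre_meas by (intro PS.emeasure_PiM) auto
    also have "\<dots> = (\<Prod>j\<in>?I. ennreal (inverse \<bar>c (\<tau> j)\<bar>) * emeasure lborel (A (\<tau> j)))"
      using A \<tau>I c by (intro prod.cong refl emeasure_lborel_scale) auto
    also have "\<dots> = (\<Prod>i\<in>?I. ennreal (inverse \<bar>c i\<bar>) * emeasure lborel (A i))"
      using \<tau> by (rule prod.reindex_bij_betw)
    also have "\<dots> = ennreal (\<Prod>i\<in>?I. inverse \<bar>c i\<bar>) * (\<Prod>i\<in>?I. emeasure lborel (A i))"
      by (simp add: prod.distrib prod_ennreal)
    finally show "emeasure (density (distr ?M ?M T) (\<lambda>_. ennreal K)) (Pi\<^sub>E ?I A)
        = (\<Prod>i\<in>?I. emeasure lborel (A i))"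
      by (simp add: mult.assoc[symmetric] Kinv)
  qed simp_all
  then show ?thesis by (simp add: T_def[abs_def] K_def)
qed

lemma integral_PiM_lborel_scale_permute:
  fixes \<sigma> :: "nat \<Rightarrow> nat" and c :: "nat \<Rightarrow> real" and f :: "(nat \<Rightarrow> real) \<Rightarrow> real"
  assumes bij: "bij_betw \<sigma> {..<n} {..<n}" and c: "\<And>i. i < n \<Longrightarrow> c i \<noteq> 0"
    and f: "f \<in> borel_measurable (Pi\<^sub>M {..<n} (\<lambda>_. lborel))"
  shows "(\<integral>y. f (restrict (\<lambda>i. c i * y (\<sigma> i)) {..<n}) \<partial>Pi\<^sub>M {..<n} (\<lambda>_. lborel))
       = (\<Prod>i<n. inverse \<bar>c i\<bar>) * (\<integral>z. f z \<partial>Pi\<^sub>M {..<n} (\<lambda>_. lborel))"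
proof -
  let ?M = "Pi\<^sub>M {..<n} (\<lambda>_. lborel::real measure)"
  define T where "T y = restrict (\<lambda>i. c i * y (\<sigma> i)) {..<n}" for y :: "nat \<Rightarrow> real"
  define K where "K = (\<Prod>i<n. \<bar>c i\<bar>)"
  have K: "K > 0" unfolding K_def using c by (intro prod_pos) auto
  have \<sigma>I: "i < n \<Longrightarrow> \<sigma> i < n" for i using bij by (auto simp: bij_betw_def)
  have Tm[measurable]: "T \<in> measurable ?M ?M"
    unfolding T_def by (rule measurable_restrict) (use \<sigma>I in auto)
  have "(\<integral>z. f z \<partial>?M) = (\<integral>z. f z \<partial>density (distr ?M ?M T) (\<lambda>_. ennreal K))"
    using PiM_lborel_scale_permute[OF bij c] by (simp add: T_def[abs_def] K_def)
  also have "\<dots> = (\<integral>z. K *\<^sub>R f z \<partial>distr ?M ?M T)"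
    using K by (intro integral_density) (auto simp: f)
  also have "\<dots> = K * (\<integral>y. f (T y) \<partial>?M)"
    using f by (simp add: integral_distr)
  finally have "(\<integral>y. f (T y) \<partial>?M) = inverse K * (\<integral>z. f z \<partial>?M)"
    using K by (simp add: field_simps)
  then show ?thesis by (simp add: T_def K_def prod_inversef[symmetric])
qed

section \<open>Comparison with the real space X(p'+1, q'+1; R)\<close>

lemma phi_coord_measurable:
  assumes "d*q + (d - 1) \<le> N" "p \<le> q"
  shows "phi_coord d p q s \<in> borel_measurable (Pi\<^sub>M {..<N} (\<lambda>_. lborel))"
proof -
  have coord: "(\<lambda>z. z i) \<in> borel_measurable (Pi\<^sub>M {..<N} (\<lambda>_. lborel))" if "i < N" for i
    using measurable_component_singleton[of i "{..<N}" "\<lambda>_. lborel"] that by simp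
  have "i < N" if "i < d * p \<or> (\<exists>j. i = d*p + j \<and> j < d * (q - p)) \<or> (\<exists>j. i = d*q + j \<and> j < d - 1)" for i
  proof -
    have "d * p + d * (q - p) = d * q" using assms(2) by (simp add: diff_mult_distrib2)
    then show ?thesis using that assms(1) mult_le_mono2[OF assms(2), of d] by auto
  qed
  then show ?thesis
    unfolding phi_coord_def[abs_def]
    by (intro borel_measurable_add borel_measurable_diff borel_measurable_times borel_measurable_power
        borel_measurable_sum borel_measurable_const borel_measurable_divide coord) auto
qed

text \<open>The coordinates of N* for X(p'+1,q'+1;R), p' = dp + d - 1, q' = dq + d - 1, expressed
  through those for X(p+1,q+1;F): the u-coordinates of R^{p'} are the dp u-coordinates followed
  by the d-1 coordinates of w; the v'-coordinates are shifted accordingly.\<close>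
definition realify_perm :: "nat \<Rightarrow> nat \<Rightarrow> nat \<Rightarrow> nat \<Rightarrow> nat" where
  "realify_perm d p q i =
     (if i < d*p then i else if i < d*p + (d - 1) then i - d*p + d*q else i - (d - 1))"

text \<open>The former w-coordinates are rescaled by e^s, since w enters phi with the weight e^(2s).\<close>
definition realify_scale :: "nat \<Rightarrow> nat \<Rightarrow> real \<Rightarrow> nat \<Rightarrow> real" where
  "realify_scale d p s i = (if d*p \<le> i \<and> i < d*p + (d - 1) then exp s else 1)"

lemma realify_perm_bij:
  assumes "p \<le> q"
  shows "bij_betw (realify_perm d p q) {..<d*q + (d - 1)} {..<d*q + (d - 1)}"
proof -
  define P where "P = d*p"
  define Q where "Q = d*q"
  have PQ: "P \<le> Q" using assms by (simp add: P_def Q_def)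
  have perm: "realify_perm d p q = (\<lambda>i. if i < P then i else if i < P + (d - 1) then i - P + Q else i - (d - 1))"
    unfolding realify_perm_def[abs_def] P_def Q_def ..
  have "realify_perm d p q ` {..<Q + (d - 1)} \<subseteq> {..<Q + (d - 1)}"
    using PQ by (auto simp: perm)
  moreover have "inj_on (realify_perm d p q) {..<Q + (d - 1)}"
    using PQ by (auto simp: inj_on_def perm split: if_splits)
  ultimately show ?thesis
    using endo_inj_surj[of "{..<Q + (d - 1)}"] by (simp add: bij_betw_def Q_def)
qed

lemma phi_coord_realify:
  assumes "p \<le> q"
  shows "phi_coord 1 (d*p + (d - 1)) (d*q + (d - 1)) s
      (restrict (\<lambda>i. realify_scale d p s i * y (realify_perm d p q i)) {..<d*q + (d - 1)})
    = phi_coord d p q s y"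
proof -
  define P where "P = d*p"
  define Q where "Q = d*q"
  have PQ: "P \<le> Q" using assms by (simp add: P_def Q_def)
  have perm: "realify_perm d p q = (\<lambda>i. if i < P then i else if i < P + (d - 1) then i - P + Q else i - (d - 1))"
    unfolding realify_perm_def[abs_def] P_def Q_def ..
  have scale: "realify_scale d p s = (\<lambda>i. if P \<le> i \<and> i < P + (d - 1) then exp s else 1)"
    unfolding realify_scale_def[abs_def] P_def ..
  let ?z = "restrict (\<lambda>i. realify_scale d p s i * y (realify_perm d p q i)) {..<Q + (d - 1)}"
  have u: "(\<Sum>i<P + (d - 1). (?z i)\<^sup>2) = (\<Sum>i<P. (y i)\<^sup>2) + exp (2 * s) * (\<Sum>i<d - 1. (y (Q+i))\<^sup>2)"
  proof -
    have "(\<Sum>i<P + (d - 1). (?z i)\<^sup>2) = (\<Sum>i<P. (?z i)\<^sup>2) + (\<Sum>j<d - 1. (?z (j + P))\<^sup>2)"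
      by (rule sum_lessThan_add)
    also have "(\<Sum>i<P. (?z i)\<^sup>2) = (\<Sum>i<P. (y i)\<^sup>2)"
      using PQ by (intro sum.cong refl) (auto simp: perm scale)
    also have "(\<Sum>j<d - 1. (?z (j + P))\<^sup>2) = (\<Sum>j<d - 1. exp (2 * s) * (y (Q + j))\<^sup>2)"
      using PQ by (intro sum.cong refl)
        (auto simp: perm scale power_mult_distrib exp_double[symmetric] add.commute)
    finally show ?thesis by (simp add: sum_distrib_left)
  qed
  have v: "(\<Sum>i<Q - P. (?z (P + (d - 1) + i))\<^sup>2) = (\<Sum>i<Q - P. (y (P + i))\<^sup>2)"
    using PQ by (intro sum.cong refl) (auto simp: perm scale)
  have "d * (q - p) = Q - P" by (simp add: P_def Q_def diff_mult_distrib2)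
  moreover have "Q + (d - 1) - (P + (d - 1)) = Q - P" by simp
  ultimately show ?thesis
    using u v unfolding phi_coord_def P_def[symmetric] Q_def[symmetric] by simp
qed

lemma realify_jacobian:
  assumes d1: "1 \<le> d" and pq: "p \<le> q"
  shows "(\<Prod>i<d*q + (d - 1). inverse \<bar>realify_scale d p s i\<bar>) = exp (- (real d - 1) * s)"
proof -
  have "(\<Prod>i<d*q + (d - 1). inverse \<bar>realify_scale d p s i\<bar>)
      = (\<Prod>i\<in>{d*p..<d*p + (d - 1)}. inverse (exp s))"
  proof (rule prod.mono_neutral_cong_right)
    have "d*p + (d - 1) \<le> d*q + (d - 1)" by (rule add_right_mono) (rule mult_le_mono2[OF pq])
    then show "{d*p..<d*p + (d - 1)} \<subseteq> {..<d*q + (d - 1)}"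
      by (intro subsetI) (simp only: atLeastLessThan_iff lessThan_iff, linarith)
  qed (auto simp: realify_scale_def)
  also have "\<dots> = exp (- s) ^ (d - 1)" by (simp add: exp_minus)
  also have "\<dots> = exp (real (d - 1) * (- s))" by (rule exp_of_nat_mult[symmetric])
  finally show ?thesis using d1 by (simp add: of_nat_diff algebra_simps)
qed

lemma rho_q_realify: "1 \<le> d \<Longrightarrow> rho_q 1 (d*p + (d - 1)) (d*q + (d - 1)) = rho_q d p q"
  by (simp add: rho_q_def of_nat_diff)

lemma rho_1_realify:
  assumes "1 \<le> d" "p \<le> q"
  shows "rho_1 d p q = rho_1 1 (d*p + (d - 1)) (d*q + (d - 1)) + (real d - 1)"
proof -
  have "real d * real p \<le> real d * real q" using assms(2) by (intro mult_left_mono) auto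
  then show ?thesis using assms by (simp add: rho_1_def of_nat_diff)
qed

text \<open>Changing variables from the coordinates of the real N* to those of N* over F turns the
  Radon transform on the real space into the one on X(p+1,q+1;F), up to the Jacobian
  e^((d-1)s) of the rescaling.\<close>
lemma Radon_realify:
  assumes d: "d \<in> {1,2,4}" and pq: "p \<le> q"
  defines "p' \<equiv> d*p + (d - 1)" and "q' \<equiv> d*q + (d - 1)"
  shows "Radon d p q (psi d p q lam) (amat p q s)
    = exp (- (real d - 1) * s) * Radon 1 p' q' (psi 1 p' q' lam) (amat p' q' s)"
proof -
  let ?N = "d*q + (d - 1)" and ?M = "Pi\<^sub>M {..<d*q + (d - 1)} (\<lambda>_. lborel::real measure)"
  let ?T = "\<lambda>y. restrict (\<lambda>i. realify_scale d p s i * y (realify_perm d p q i)) {..<?N}"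
  define F where "F z = sqrt (phi_coord 1 p' q' s z) powr (- lam - rho_q d p q)" for z
  have d1: "1 \<le> d" using d by auto
  have coords: "ncoord d p q = ?N" "ncoord 1 p' q' = ?N"
    using d1 by (simp_all add: ncoord_def q'_def)
  have F: "F \<in> borel_measurable ?M"
  proof -
    have "phi_coord 1 p' q' s \<in> borel_measurable ?M"
      using pq by (intro phi_coord_measurable) (simp_all add: p'_def q'_def)
    then have "(\<lambda>z. sqrt (phi_coord 1 p' q' s z)) \<in> borel_measurable ?M"
      using measurable_compose[OF _ borel_measurable_sqrt] by (auto simp: o_def)
    then show ?thesis unfolding F_def by (intro powr_real_measurable) auto
  qed
  have "Radon d p q (psi d p q lam) (amat p q s) = (\<integral>y. F (?T y) \<partial>?M)"
    unfolding Radon_psi_formula[OF d pq] coords F_def p'_def q'_def phi_coord_realify[OF pq] ..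
  also have "\<dots> = (\<Prod>i<?N. inverse \<bar>realify_scale d p s i\<bar>) * (\<integral>z. F z \<partial>?M)"
    by (rule integral_PiM_lborel_scale_permute[OF realify_perm_bij[OF pq] _ F])
      (simp add: realify_scale_def)
  also have "(\<Prod>i<?N. inverse \<bar>realify_scale d p s i\<bar>) = exp (- (real d - 1) * s)"
    using d1 pq by (rule realify_jacobian)
  also have "(\<integral>z. F z \<partial>?M) = Radon 1 p' q' (psi 1 p' q' lam) (amat p' q' s)"
  proof -
    have "p' \<le> q'" using pq by (simp add: p'_def q'_def)
    then have "Radon 1 p' q' (psi 1 p' q' lam) (amat p' q' s)
        = (\<integral>z. sqrt (phi_coord 1 p' q' s z) powr (- lam - rho_q 1 p' q') \<partial>Pi\<^sub>M {..<ncoord 1 p' q'} (\<lambda>_. lborel))"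
      by (intro Radon_psi_formula) simp_all
    moreover have "rho_q 1 p' q' = rho_q d p q" unfolding p'_def q'_def using d1 by (rule rho_q_realify)
    ultimately show ?thesis unfolding coords(2) F_def by simp
  qed
  finally show ?thesis .
qed

text \<open>Since rho_1 exceeds its real counterpart by d - 1, the factor e^(-(d-1)s) is absorbed and
  the Abel-type transforms coincide.\<close>
lemma Aop_realify:
  assumes "d \<in> {1,2,4}" "p \<le> q"
  shows "Aop d p q (psi d p q lam)
    = Aop 1 (d*p + (d - 1)) (d*q + (d - 1)) (psi 1 (d*p + (d - 1)) (d*q + (d - 1)) lam)"
proof
  fix s
  have "rho_1 d p q * s + (- (real d - 1) * s) = rho_1 1 (d*p + (d - 1)) (d*q + (d - 1)) * s"
    using assms rho_1_realify[of d p q] by (auto simp: algebra_simps)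
  then show "Aop d p q (psi d p q lam) s
      = Aop 1 (d*p + (d - 1)) (d*q + (d - 1)) (psi 1 (d*p + (d - 1)) (d*q + (d - 1)) lam) s"
    unfolding Aop_def Radon_realify[OF assms] by (simp add: mult.assoc[symmetric] exp_add[symmetric])
qed

theorem mainTheorem7:
  fixes d p q p' q' :: nat and lam :: real and mu :: int
  assumes "d \<in> {2, 4}"
    and "p < q"
    and "p' + 1 = d * (p + 1)" and "q' + 1 = d * (q + 1)"
    and "lam = (real (d * q) - real (d * p)) / 2 - 1 + of_int mu"
    and "even mu" and "lam > 0"
  shows "rho_q d p q = (real p' + real q') / 2
    \<and> rho_q 1 p' q' = (real p' + real q') / 2
    \<and> (\<forall>s. Radon d p q (psi d p q lam) (amat p q s)
           = exp (- (real d - 1) * s) * Radon 1 p' q' (psi 1 p' q' lam) (amat p' q' s))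
    \<and> Aop d p q (psi d p q lam) = Aop 1 p' q' (psi 1 p' q' lam)"
proof -
  have d: "d \<in> {1,2,4}" "1 \<le> d" and pq: "p \<le> q" using assms(1,2) by auto
  have p': "p' = d*p + (d - 1)" and q': "q' = d*q + (d - 1)"
    using assms(3,4) d(2) by (simp_all add: algebra_simps)
  have "rho_q 1 p' q' = (real p' + real q') / 2" by (simp add: rho_q_def)
  moreover have "rho_q d p q = rho_q 1 p' q'" unfolding p' q' using d(2) by (rule rho_q_realify[symmetric])
  ultimately show ?thesis
    unfolding p' q' using Radon_realify[OF d(1) pq] Aop_realify[OF d(1) pq] by simp
qed

end
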